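(* Let $q \equiv 5 \pmod{8}$ be a prime power. Then the cyclotomic tournament $CT_q$ is a nearly-doubly-regular tournament if and only if $q = s^2 + 4$ for some odd integer $s$.
   Context: A tournament is an orientation of a complete graph. A tournament with $n$ vertices is regular if $n$ is odd and every vertex has out-degree $(n-1)/2$. For even $n$, a tournament with $n$ vertices is near-regular if every vertex has out-degree $n/2$ or $n/2-1$. A regular tournament with $n$ vertices is nearly-doubly-regular if $n \equiv 1 \pmod 4$ and, for every vertex, both the sub-tournament induced by its out-neighbours and the sub-tournament induced by its in-neighbours are near-regular. Cyclotomic tournament: let $q$ be a prime power with $q \equiv 5 \pmod 8$ (so $q-1 = 4m$ with $m$ odd), let $g$ be a primitive element (generator of $\mathbb{F}_q^*$), let $C_0^{(4)}$ be the subgroup of index $4$ in $\mathbb{F}_q^*$ and $C_i^{(4)} = g^i C_0^{(4)}$. Put $D = C_0^{(4)} \cup C_1^{(4)}$; then $(D,-D)$ partitions $\mathbb{F}_q^*$. The cyclotomic tournament $CT_q$ has vertex set $\mathbb{F}_q$ and an arc from $x$ to $y$ if and only if $x - y \in D$. *)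

theory Defs
  imports "HOL-Library.Cardinality"
begin

definition tournament :: "('a \<Rightarrow> 'a \<Rightarrow> bool) \<Rightarrow> 'a set \<Rightarrow> bool" where
  "tournament A V \<longleftrightarrow> finite V \<and> (\<forall>x\<in>V. \<not> A x x) \<and>
     (\<forall>x\<in>V. \<forall>y\<in>V. x \<noteq> y \<longrightarrow> (A x y \<longleftrightarrow> \<not> A y x))"

definition out_nbrs :: "('a \<Rightarrow> 'a \<Rightarrow> bool) \<Rightarrow> 'a set \<Rightarrow> 'a \<Rightarrow> 'a set" where
  "out_nbrs A V x = {y \<in> V. A x y}"

definition in_nbrs :: "('a \<Rightarrow> 'a \<Rightarrow> bool) \<Rightarrow> 'a set \<Rightarrow> 'a \<Rightarrow> 'a set" where
  "in_nbrs A V x = {y \<in> V. A y x}"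

definition outdeg :: "('a \<Rightarrow> 'a \<Rightarrow> bool) \<Rightarrow> 'a set \<Rightarrow> 'a \<Rightarrow> nat" where
  "outdeg A V x = card (out_nbrs A V x)"

definition regular_tournament :: "('a \<Rightarrow> 'a \<Rightarrow> bool) \<Rightarrow> 'a set \<Rightarrow> bool" where
  "regular_tournament A V \<longleftrightarrow> tournament A V \<and> odd (card V) \<and>
     (\<forall>x\<in>V. outdeg A V x = (card V - 1) div 2)"

text \<open>Near-regular (even order): every out-degree is n/2 or n/2 - 1.
  Applied to a vertex subset, this is the sub-tournament induced on it.\<close>
definition near_regular :: "('a \<Rightarrow> 'a \<Rightarrow> bool) \<Rightarrow> 'a set \<Rightarrow> bool" where
  "near_regular A V \<longleftrightarrow> tournament A V \<and> even (card V) \<and>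
     (\<forall>x\<in>V. outdeg A V x = card V div 2 \<or> outdeg A V x = card V div 2 - 1)"

definition nearly_doubly_regular :: "('a \<Rightarrow> 'a \<Rightarrow> bool) \<Rightarrow> 'a set \<Rightarrow> bool" where
  "nearly_doubly_regular A V \<longleftrightarrow> regular_tournament A V \<and> card V mod 4 = 1 \<and>
     (\<forall>x\<in>V. near_regular A (out_nbrs A V x) \<and> near_regular A (in_nbrs A V x))"

definition primitive_element :: "'a::{finite,field} \<Rightarrow> bool" where
  "primitive_element g \<longleftrightarrow> g \<noteq> 0 \<and> (\<forall>x. x \<noteq> 0 \<longrightarrow> (\<exists>k::nat. x = g ^ k))"

definition cyc_C0 :: "'a::{finite,field} set" where
  "cyc_C0 = {x ^ 4 | x. x \<noteq> 0}"

definition cyc_class :: "'a::{finite,field} \<Rightarrow> nat \<Rightarrow> 'a set" where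
  "cyc_class g i = (\<lambda>c. g ^ i * c) ` cyc_C0"

definition cyc_D :: "'a::{finite,field} \<Rightarrow> 'a set" where
  "cyc_D g = cyc_class g 0 \<union> cyc_class g 1"

definition cyc_arc :: "'a::{finite,field} \<Rightarrow> 'a \<Rightarrow> 'a \<Rightarrow> bool" where
  "cyc_arc g x y \<longleftrightarrow> x - y \<in> cyc_D g"

end

(*
  For d in D, the out-degree of 0 inside the out-neighbourhood of d is the cyclotomic number
  N(d) = |D \<inter> (D + d)|. By translation invariance, CT_q is nearly doubly regular iff
  N(d) \<in> {m, m - 1} for all d \<in> D (where q = 4m + 1); the in-neighbourhoods then follow from
  N(d) + M(d) = 2m - 1 with M(d) = |D \<inter> (d - D)|.

  Expanding the indicator of D in the quartic character \<chi> gives 4 N(d) = q - 3 \<mp> B, where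
  J = A + iB = \<Sum>\<^sub>y \<chi>(y) \<chi>(1 - y) is the Jacobi sum. Hence CT_q is nearly doubly regular iff
  B = \<plusminus>2, and since A\<^sup>2 + B\<^sup>2 = |J|\<^sup>2 = q this gives q = A\<^sup>2 + 4 with A odd.

  Conversely let q = s\<^sup>2 + 4. Reducing J into F_q, where \<chi>(x) becomes x^m and i becomes
  \<iota> = g^m, the sums \<Sum> x^m (1 - x)^m = 0 and \<Sum> x^3m (1 - x)^3m = binom(3m, m) \<noteq> 0 (Lucas)
  give A + B\<iota> = 0 and B \<noteq> 0 in F_q. With the sign of s chosen so that \<iota>s = 2, the integers
  As - 2B and 2A + Bs are prime to q, and comparing q = A\<^sup>2 + B\<^sup>2 = s\<^sup>2 + 4 forces B = \<plusminus>2.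
*)

theory Submission
  imports Defs "HOL-Computational_Algebra.Polynomial" "HOL-Number_Theory.Cong"
begin

section \<open>Binomial coefficients in prime characteristic\<close>

lemma of_nat_mult_monom: "of_nat n * monom (c::'a::comm_semiring_1) k = monom (of_nat n * c) k"
  by (induct n) (simp_all add: distrib_right add_monom)

lemma X_plus_1_power:
  "(monom (1::'a::comm_semiring_1) 1 + 1) ^ N = (\<Sum>k\<le>N. monom (of_nat (N choose k)) k)"
  by (subst binomial_ring) (simp add: monom_power of_nat_mult_monom)

lemma coeff_X_plus_1_power:
  "coeff ((monom (1::'a::comm_semiring_1) 1 + 1) ^ N) r = of_nat (N choose r)"
  unfolding X_plus_1_power coeff_sum coeff_monom
  by (cases "r \<le> N") (auto simp: binomial_eq_0)

lemma add_mult_eq_add_mult_iff: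
  fixes i j r0 r p :: nat
  assumes "i < p" "r0 < p"
  shows "i + p * j = r0 + p * r \<longleftrightarrow> i = r0 \<and> j = r"
proof
  assume h: "i + p * j = r0 + p * r"
  have "(i + p * j) mod p = i" "(r0 + p * r) mod p = r0" "(i + p * j) div p = j" "(r0 + p * r) div p = r"
    using assms by auto
  with h show "i = r0 \<and> j = r" by metis
qed auto

text \<open>One step of Lucas' theorem: compare the coefficients of \<open>X ^ (r0 + p * r)\<close> in
  \<open>(X + 1) ^ (n0 + p * n) = (X + 1) ^ n0 * (X ^ p + 1) ^ n\<close>.\<close>
lemma of_nat_choose_CHAR_digit:
  assumes pr: "prime CHAR('a::comm_ring_1)" and n0: "n0 < CHAR('a)" and r0: "r0 < CHAR('a)"
  shows "(of_nat ((n0 + CHAR('a) * n) choose (r0 + CHAR('a) * r)) :: 'a)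
         = of_nat (n0 choose r0) * of_nat (n choose r)"
proof -
  define p where "p = CHAR('a)"
  define X where "X = (monom (1::'a) 1)"
  have fr: "(X + 1) ^ p = X ^ p + 1"
    using freshmans_dream[of p X 1] pr by (simp add: p_def)
  have Xp: "(X ^ p + 1) ^ n = (\<Sum>j\<le>n. monom (of_nat (n choose j)) (p * j))"
    by (subst binomial_ring) (simp add: X_def monom_power of_nat_mult_monom mult.commute)
  have "(X + 1) ^ (n0 + p * n) = (X + 1) ^ n0 * ((X + 1) ^ p) ^ n"
    by (simp add: power_add power_mult)
  also have "\<dots> = (\<Sum>i\<le>n0. monom (of_nat (n0 choose i)) i) * (\<Sum>j\<le>n. monom (of_nat (n choose j)) (p * j))"
    unfolding fr Xp by (subst X_def, subst X_plus_1_power, rule refl)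
  also have "\<dots> = (\<Sum>i\<le>n0. \<Sum>j\<le>n. monom (of_nat (n0 choose i) * of_nat (n choose j)) (i + p * j))"
    by (simp add: sum_distrib_left sum_distrib_right mult_monom sum.swap[of _ "{..n}"])
  finally have expand: "(X + 1) ^ (n0 + p * n) = \<dots>" .
  have digits: "i + p * j = r0 + p * r \<longleftrightarrow> i = r0 \<and> j = r" if "i \<le> n0" for i j
    using that n0 r0 unfolding p_def by (intro add_mult_eq_add_mult_iff) auto
  have "coeff ((X + 1) ^ (n0 + p * n)) (r0 + p * r) =
        (\<Sum>i\<le>n0. \<Sum>j\<le>n. if i = r0 \<and> j = r then of_nat (n0 choose i) * of_nat (n choose j) else 0)"
    unfolding expand coeff_sum coeff_monom
    by (intro sum.cong refl) (use digits in auto)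
  also have "\<dots> = of_nat (n0 choose r0) * of_nat (n choose r)"
  proof (cases "r0 \<le> n0 \<and> r \<le> n")
    case True
    have "(\<Sum>j\<le>n. if i = r0 \<and> j = r then of_nat (n0 choose i) * of_nat (n choose j) else (0::'a))
       = (if i = r0 then of_nat (n0 choose r0) * of_nat (n choose r) else 0)" for i
      using True by (cases "i = r0") (simp_all add: sum.delta)
    then show ?thesis
      using True by (simp add: sum.delta)
  next
    case False
    then show ?thesis
      by (auto simp: binomial_eq_0 sum.If_cases)
  qed
  finally show ?thesis
    using coeff_X_plus_1_power[where 'a='a, of "n0 + p * n" "r0 + p * r"] by (simp add: X_def p_def)
qed

text \<open>Lucas' theorem for numbers whose base-\<open>p\<close> digits are all equal.\<close>
lemma of_nat_choose_repdigit:
  assumes pr: "prime CHAR('a::comm_ring_1)" and a: "a < CHAR('a)" and b: "b < CHAR('a)"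
  shows "(of_nat ((a * (\<Sum>j<k. CHAR('a) ^ j)) choose (b * (\<Sum>j<k. CHAR('a) ^ j))) :: 'a)
         = of_nat (a choose b) ^ k"
proof (induction k)
  case (Suc k)
  define R where "R = (\<Sum>j<k. CHAR('a) ^ j)"
  have R_Suc: "(\<Sum>j<Suc k. CHAR('a) ^ j) = 1 + CHAR('a) * R"
    unfolding R_def by (simp only: sum.lessThan_Suc_shift power_0 power_Suc sum_distrib_left)
  have "(of_nat ((a * (\<Sum>j<Suc k. CHAR('a) ^ j)) choose (b * (\<Sum>j<Suc k. CHAR('a) ^ j))) :: 'a)
     = of_nat ((a + CHAR('a) * (a * R)) choose (b + CHAR('a) * (b * R)))"
    unfolding R_Suc by (simp add: algebra_simps)
  also have "\<dots> = of_nat (a choose b) * of_nat ((a * R) choose (b * R))"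
    by (rule of_nat_choose_CHAR_digit[OF pr a b])
  finally show ?case using Suc.IH unfolding R_def by simp
qed simp

lemma of_nat_choose_neq_0_CHAR:
  assumes pr: "prime CHAR('a::semiring_1)" and ba: "b \<le> a" and a: "a < CHAR('a)"
  shows "(of_nat (a choose b) :: 'a) \<noteq> 0"
proof
  assume "(of_nat (a choose b) :: 'a) = 0"
  hence "CHAR('a) dvd (a choose b)" by (simp add: of_nat_eq_0_iff_char_dvd)
  moreover have "fact b * fact (a - b) * (a choose b) = (fact a :: nat)"
    using ba by (rule binomial_fact_lemma)
  ultimately have "CHAR('a) dvd (fact a :: nat)" by (metis dvd_mult)
  hence "CHAR('a) \<le> a" using prime_dvd_fact_iff[OF pr] by simp
  thus False using a by simp
qed

lemma nat_geometric_sum: "(p - 1) * (\<Sum>j<k. p ^ j) = p ^ k - (1::nat)" if "p \<ge> 1"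
proof (induction k)
  case (Suc k)
  have "(p - 1) * (\<Sum>j<Suc k. p ^ j) = (p - 1) * (\<Sum>j<k. p ^ j) + (p - 1) * p ^ k"
    by (simp add: algebra_simps)
  also have "\<dots> = p ^ k - 1 + (p - 1) * p ^ k" using Suc by simp
  also have "\<dots> = p ^ Suc k - 1"
  proof -
    have "p ^ k \<ge> 1" using that by simp
    thus ?thesis using that by (simp add: algebra_simps diff_mult_distrib)
  qed
  finally show ?case .
qed simp

section \<open>Finite fields\<close>

lemma prime_CHAR_finite_field: "prime CHAR('a::{finite,field})"
  by (rule prime_CHAR_semidom) (rule finite_imp_CHAR_pos, simp)

lemma power_CARD_minus_1_eq_1:
  fixes x :: "'a::{finite,field}"
  assumes x: "x \<noteq> 0"
  shows "x ^ (CARD('a) - 1) = 1"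
proof -
  have "(\<Prod>y\<in>UNIV-{0}. x * y) = (\<Prod>y\<in>UNIV-{0::'a}. y)"
    by (rule prod.reindex_bij_witness[of _ "\<lambda>y. y / x" "\<lambda>y. x * y"]) (use x in auto)
  moreover have "(\<Prod>y\<in>UNIV-{0}. x * y) = x ^ card (UNIV - {0::'a}) * (\<Prod>y\<in>UNIV-{0::'a}. y)"
    by (simp add: prod.distrib)
  moreover have "card (UNIV - {0::'a}) = CARD('a) - 1" by (simp add: card_Diff_subset)
  moreover have "(\<Prod>y\<in>UNIV-{0::'a}. y) \<noteq> 0" by (simp add: prod_zero_iff)
  ultimately show ?thesis by simp
qed

lemma sum_UNIV_shift: "(\<Sum>x\<in>UNIV. f (x + c)) = (\<Sum>x\<in>UNIV. f (x :: 'a::{finite,ab_group_add}))"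
  by (rule sum.reindex_bij_witness[of _ "\<lambda>x. x - c" "\<lambda>x. x + c"]) auto

lemma sum_UNIV_shift_diff: "(\<Sum>x\<in>UNIV. f (x - c)) = (\<Sum>x\<in>UNIV. f (x :: 'a::{finite,ab_group_add}))"
  using sum_UNIV_shift[of f "- c"] by simp

lemma sum_UNIV_scale: "(c::'a::{finite,field}) \<noteq> 0 \<Longrightarrow> (\<Sum>x\<in>UNIV. f (c * x)) = (\<Sum>x\<in>UNIV. f x)"
  by (rule sum.reindex_bij_witness[of _ "\<lambda>x. x / c" "\<lambda>x. c * x"]) auto

lemma bij_betw_fractional_linear:
  fixes u :: "'a::field"
  assumes u: "u \<noteq> 1"
  shows "bij_betw (\<lambda>y. (1 - u * y) / (1 - y)) (UNIV - {0, 1}) (UNIV - {1, u})"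
proof (rule bij_betw_byWitness[where f'="\<lambda>w. (w - 1) / (w - u)"])
  have u1: "1 - u \<noteq> 0" using u by simp
  have f_minus: "(1 - u * y) / (1 - y) - 1 = y * (1 - u) / (1 - y)"
    "(1 - u * y) / (1 - y) - u = (1 - u) / (1 - y)" if "y \<noteq> 1" for y
    using that by (simp_all add: field_simps)
  have g_minus: "1 - (w - 1) / (w - u) = (1 - u) / (w - u)"
    "1 - u * ((w - 1) / (w - u)) = w * (1 - u) / (w - u)" if "w \<noteq> u" for w
    using that by (simp_all add: field_simps)
  show "\<forall>y\<in>UNIV - {0, 1}. ((1 - u * y) / (1 - y) - 1) / ((1 - u * y) / (1 - y) - u) = y"
  proof
    fix y :: 'a assume "y \<in> UNIV - {0, 1}"
    hence y1: "y \<noteq> 1" and "1 - y \<noteq> 0" by auto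
    thus "((1 - u * y) / (1 - y) - 1) / ((1 - u * y) / (1 - y) - u) = y"
      unfolding f_minus[OF y1] using u1 by simp
  qed
  show "\<forall>w\<in>UNIV - {1, u}. (1 - u * ((w - 1) / (w - u))) / (1 - (w - 1) / (w - u)) = w"
  proof
    fix w :: 'a assume "w \<in> UNIV - {1, u}"
    hence wu: "w \<noteq> u" and "w - u \<noteq> 0" by auto
    thus "(1 - u * ((w - 1) / (w - u))) / (1 - (w - 1) / (w - u)) = w"
      unfolding g_minus[OF wu] using u1 by simp
  qed
  show "(\<lambda>y. (1 - u * y) / (1 - y)) ` (UNIV - {0, 1}) \<subseteq> UNIV - {1, u}"
  proof (rule image_subsetI)
    fix y :: 'a assume "y \<in> UNIV - {0, 1}"
    hence y: "y \<noteq> 0" "y \<noteq> 1" by auto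
    hence "(1 - u * y) / (1 - y) - 1 \<noteq> 0" "(1 - u * y) / (1 - y) - u \<noteq> 0"
      unfolding f_minus[OF y(2)] using u1 by simp_all
    thus "(1 - u * y) / (1 - y) \<in> UNIV - {1, u}" by simp
  qed
  show "(\<lambda>w. (w - 1) / (w - u)) ` (UNIV - {1, u}) \<subseteq> UNIV - {0, 1}"
    using u by (auto simp: divide_eq_1_iff)
qed

lemma card_Collect_diff_left: "card {z::'a::ab_group_add. P (x - z)} = card {e. P e}"
proof -
  have "(\<lambda>e. x - e) ` {e. P e} = {z. P (x - z)}"
    by (auto simp: image_iff intro!: exI[of _ "x - _"])
  moreover have "inj (\<lambda>e::'a. x - e)" by (auto simp: inj_on_def)
  ultimately show ?thesis by (metis card_image inj_on_subset subset_UNIV)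
qed

lemma card_Collect_diff_right: "card {z::'a::ab_group_add. P (z - x)} = card {e. P e}"
proof -
  have "(\<lambda>e. e + x) ` {e. P e} = {z. P (z - x)}"
    by (auto simp: image_iff intro!: exI[of _ "_ - x"])
  moreover have "inj (\<lambda>e::'a. e + x)" by (auto simp: inj_on_def)
  ultimately show ?thesis by (metis card_image inj_on_subset subset_UNIV)
qed

definition add_closed :: "'a::field set \<Rightarrow> bool" where
  "add_closed S \<longleftrightarrow> 0 \<in> S \<and> (\<forall>x\<in>S. \<forall>y\<in>S. x + y \<in> S)"

lemma add_closed_of_nat_mult: "add_closed S \<Longrightarrow> x \<in> S \<Longrightarrow> of_nat n * x \<in> S"
  by (induct n) (auto simp: add_closed_def distrib_right)

lemma add_closed_diff:
  fixes S :: "'a::{finite,field} set"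
  assumes S: "add_closed S" and x: "x \<in> S" and y: "y \<in> S"
  shows "x - y \<in> S"
proof -
  have "CHAR('a) \<ge> 1" using prime_CHAR_finite_field prime_ge_1_nat by blast
  hence "of_nat (CHAR('a) - 1) * y = - (y :: 'a)"
    by (simp add: of_nat_diff)
  hence "- y \<in> S" using add_closed_of_nat_mult[OF S y, of "CHAR('a) - 1"] by simp
  thus ?thesis using S x unfolding add_closed_def by (metis diff_conv_add_uminus)
qed

lemma of_nat_mult_notin_add_closed:
  fixes S :: "'a::{finite,field} set"
  assumes S: "add_closed S" and v: "v \<notin> S" and d: "0 < d" "d < CHAR('a)"
  shows "of_nat d * v \<notin> S"
proof
  assume dv: "of_nat d * v \<in> S"
  have "\<not> CHAR('a) dvd d" using d by (auto dest: dvd_imp_le)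
  hence "coprime d CHAR('a)"
    using prime_imp_coprime[OF prime_CHAR_finite_field] by (simp add: coprime_commute)
  then obtain k where "[d * k = 1] (mod CHAR('a))" using cong_solve_coprime_nat by auto
  hence "(of_nat (d * k) :: 'a) = 1" by (metis of_nat_1 of_nat_eq_iff_cong_CHAR)
  hence "v = of_nat k * (of_nat d * v)" by (simp add: algebra_simps flip: of_nat_mult)
  with add_closed_of_nat_mult[OF S dv, of k] v show False by simp
qed

lemma inj_on_add_closed_translates:
  fixes S :: "'a::{finite,field} set"
  assumes S: "add_closed S" and v: "v \<notin> S"
  shows "inj_on (\<lambda>(s, j). s + of_nat j * v) (S \<times> {..<CHAR('a)})"
proof (rule inj_onI, clarsimp)
  have less: False if "j < j'" "j' < CHAR('a)" "s \<in> S" "s' \<in> S"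
    and eq: "s + of_nat j * v = s' + of_nat j' * v" for s s' :: 'a and j j'
  proof -
    have "of_nat (j' - j) * v = s - s'"
      using that by (simp add: of_nat_diff algebra_simps)
    hence "of_nat (j' - j) * v \<in> S" using add_closed_diff[OF S] that by simp
    with of_nat_mult_notin_add_closed[OF S v, of "j' - j"] that show False by simp
  qed
  fix s j s' j'
  assume "s \<in> S" "s' \<in> S" "j < CHAR('a)" "j' < CHAR('a)" and eq: "s + of_nat j * v = s' + of_nat j' * v"
  hence "j = j'" using less[of j j' s s'] less[of j' j s' s]
    by (cases j j' rule: linorder_cases) auto
  with eq show "s = s' \<and> j = j'" by simp
qed

text \<open>Adjoining one element \<open>v\<close> to an additive subgroup \<open>S\<close> multiplies its size by
  the characteristic: the translates \<open>S + j * v\<close> for \<open>j < CHAR('a)\<close> are pairwise disjoint.\<close>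
lemma add_closed_extend:
  fixes S :: "'a::{finite,field} set"
  assumes S: "add_closed S" and v: "v \<notin> S"
  defines "S' \<equiv> (\<lambda>(s, j). s + of_nat j * v) ` (S \<times> {..<CHAR('a)})"
  shows "add_closed S'" "card S' = CHAR('a) * card S" "S \<subset> S'"
proof -
  define p where "p = CHAR('a)"
  have p1: "1 < p" using prime_CHAR_finite_field prime_gt_1_nat p_def by blast
  have "S \<subseteq> S'"
  proof
    fix s assume "s \<in> S" thus "s \<in> S'" unfolding S'_def using p1
      by (intro image_eqI[of _ _ "(s, 0)"]) (auto simp: p_def)
  qed
  moreover have "v \<in> S'" unfolding S'_def using p1 S
    by (intro image_eqI[of _ _ "(0, 1)"]) (auto simp: p_def add_closed_def)
  ultimately show "S \<subset> S'" using v by blast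
  show "add_closed S'"
    unfolding add_closed_def
  proof (intro conjI ballI)
    show "0 \<in> S'" unfolding S'_def using p1 S
      by (intro image_eqI[of _ _ "(0, 0)"]) (auto simp: p_def add_closed_def)
  next
    fix x y assume "x \<in> S'" "y \<in> S'"
    then obtain s j s' j' where xy: "x = s + of_nat j * v" "y = s' + of_nat j' * v"
      and ss: "s \<in> S" "s' \<in> S"
      unfolding S'_def p_def by auto
    have "(of_nat (j + j') :: 'a) = of_nat ((j + j') mod p)"
      unfolding of_nat_eq_iff_cong_CHAR p_def by (simp add: cong_def)
    hence "x + y = (s + s') + of_nat ((j + j') mod p) * v"
      unfolding xy
        by (metis (no_types, lifting) add.assoc add.left_commute distrib_right of_nat_add)
    moreover have "s + s' \<in> S" using S ss by (simp add: add_closed_def)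
    moreover have "(j + j') mod p < p" using p1 by simp
    ultimately show "x + y \<in> S'" unfolding S'_def p_def by force
  qed
  have "card S' = card (S \<times> {..<CHAR('a)})"
    unfolding S'_def by (rule card_image[OF inj_on_add_closed_translates[OF S v]])
  thus "card S' = CHAR('a) * card S" by simp
qed

lemma CARD_eq_CHAR_power: "\<exists>k. CARD('a::{finite,field}) = CHAR('a) ^ k"
proof -
  have grow: "add_closed S \<Longrightarrow> card S = CHAR('a) ^ i \<Longrightarrow> \<exists>k. CARD('a) = CHAR('a) ^ k" for S :: "'a set" and i
  proof (induction "CARD('a) - card S" arbitrary: S i rule: less_induct)
    case less
    show ?case
    proof (cases "S = UNIV")
      case True then show ?thesis using less.prems by auto
    next
      case False
      then obtain v where v: "v \<notin> S" by auto
      define S' where "S' \<equiv> (\<lambda>(s, j). s + of_nat j * v) ` (S \<times> {..<CHAR('a)})"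
      note ext = add_closed_extend[OF less.prems(1) v, folded S'_def]
      have "card S < card S'" using ext(3) by (intro psubset_card_mono) auto
      moreover have "card S' \<le> CARD('a)" by (rule card_mono) auto
      ultimately have "CARD('a) - card S' < CARD('a) - card S" by linarith
      moreover have "card S' = CHAR('a) ^ Suc i" using ext(2) less.prems(2) by simp
      ultimately show ?thesis using less.hyps ext(1) by blast
    qed
  qed
  show ?thesis by (rule grow[of "{0}" 0]) (auto simp: add_closed_def)
qed

lemma of_nat_CARD_eq_0: "(of_nat CARD('a) :: 'a::{finite,field}) = 0"
proof -
  obtain k where k: "CARD('a) = CHAR('a) ^ k" using CARD_eq_CHAR_power by blast
  have "2 \<le> CARD('a)" using card_mono[of UNIV "{0, 1::'a}"] by simp
  hence "k \<noteq> 0" using k by (intro notI) simp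
  hence "CHAR('a) dvd CARD('a)" by (simp add: k)
  thus ?thesis by (simp add: of_nat_eq_0_iff_char_dvd)
qed
lemma coprime_int_CARD_if_not_CHAR_dvd:
  assumes "\<not> int CHAR('a::{finite,field}) dvd z"
  shows "coprime z (int CARD('a))"
proof -
  obtain k where k: "CARD('a) = CHAR('a) ^ k" using CARD_eq_CHAR_power by blast
  have "prime (int CHAR('a))" using prime_CHAR_finite_field[where 'a='a] by simp
  hence "coprime (int CHAR('a)) z" using assms by (rule prime_imp_coprime)
  thus ?thesis using k by (simp add: coprime_commute)
qed

definition ipow_re :: "nat \<Rightarrow> int" where
  "ipow_re k = (if k mod 4 = 0 then 1 else if k mod 4 = 2 then -1 else 0)"

definition ipow_im :: "nat \<Rightarrow> int" where
  "ipow_im k = (if k mod 4 = 1 then 1 else if k mod 4 = 3 then -1 else 0)"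

lemma power_mod_4:
  fixes z :: "'b::monoid_mult"
  assumes "z ^ 4 = 1"
  shows "z ^ k = z ^ (k mod 4)"
proof -
  have "z ^ k = z ^ (4 * (k div 4) + k mod 4)" by simp
  also have "\<dots> = z ^ (k mod 4)" by (simp only: power_add power_mult assms) simp
  finally show ?thesis .
qed

lemma i_power_mod_4: "\<i> ^ (k mod 4) = \<i> ^ k"
  by (rule power_mod_4[symmetric]) (simp add: power4_eq_xxxx)

lemma power_of_sqrt_minus_1:
  fixes z :: "'b::comm_ring_1"
  assumes z: "z ^ 2 = -1"
  shows "z ^ k = of_int (ipow_re k) + of_int (ipow_im k) * z"
proof -
  have z3: "z ^ 3 = - z" using z by (simp add: power3_eq_cube power2_eq_square)
  have "z ^ 4 = (z ^ 2) ^ 2" by (simp flip: power_mult)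
  hence "z ^ 4 = 1" using z by simp
  hence "z ^ k = z ^ (k mod 4)" by (rule power_mod_4)
  moreover have "k mod 4 = 0 \<or> k mod 4 = 1 \<or> k mod 4 = 2 \<or> k mod 4 = 3" by linarith
  ultimately show ?thesis by (auto simp: ipow_re_def ipow_im_def z z3)
qed

lemma triple_mod_4:
  "(3 * k) mod 4 = (if (k::nat) mod 4 = 1 then 3 else if k mod 4 = 3 then 1 else k mod 4)"
proof -
  have "(3 * k) mod 4 = (3 * (k mod 4)) mod 4" by (simp add: mod_mult_right_eq)
  moreover have "k mod 4 = 0 \<or> k mod 4 = 1 \<or> k mod 4 = 2 \<or> k mod 4 = 3" by linarith
  ultimately show ?thesis by auto
qed

lemma ipow_re_triple: "ipow_re (3 * k) = ipow_re k"
  by (simp add: ipow_re_def triple_mod_4)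

lemma ipow_im_triple: "ipow_im (3 * k) = - ipow_im k"
  by (simp add: ipow_im_def triple_mod_4)

lemma odd_square_mod_8:
  fixes p :: nat
  assumes "odd p"
  shows "p * p mod 8 = 1"
proof -
  obtain t where t: "p = 2 * t + 1" using assms oddE by blast
  have "even (t * (t + 1))" by simp
  then obtain u where "t * (t + 1) = 2 * u" by blast
  hence "p * p = 8 * u + 1" unfolding t by (simp add: algebra_simps)
  thus ?thesis by simp
qed

lemma odd_power_mod_8:
  fixes p :: nat
  assumes "odd p"
  shows "p ^ k mod 8 = 1 \<or> p ^ k mod 8 = p mod 8"
proof (induction k)
  case (Suc k)
  have step: "p ^ Suc k mod 8 = (p ^ k mod 8) * p mod 8"
    by (metis mod_mult_left_eq mult.commute power_Suc)
  from Suc.IH show ?case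
  proof
    assume "p ^ k mod 8 = p mod 8"
    hence "p ^ Suc k mod 8 = p * p mod 8" using step by (simp add: mod_mult_left_eq)
    thus ?case using odd_square_mod_8[OF assms] by simp
  qed (use step in simp)
qed simp

lemma power_mod_8_eq_5_imp_mod_4:
  fixes p :: nat
  assumes "p ^ k mod 8 = 5"
  shows "p mod 4 = 1"
proof -
  have "k \<noteq> 0" using assms by (cases k) simp_all
  moreover have "p ^ k mod 2 = 1" using mod_mod_cancel[of 2 8 "p ^ k"] assms by simp
  hence "odd (p ^ k)" by (metis odd_iff_mod_2_eq_one)
  ultimately have "odd p" by (auto simp: even_power)
  hence "p mod 8 = 5" using odd_power_mod_8[of p k] assms by auto
  thus ?thesis using mod_mod_cancel[of 4 8 p] by simp
qed
text \<open>Both \<open>q \<mid> (A s + 2 B) (A s - 2 B)\<close> and \<open>q \<mid> (2 A - B s) (2 A + B s)\<close>; the coprimality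
  hypotheses force \<open>q\<close> to divide the first factors, and
  \<open>(A s + 2 B)\<^sup>2 + (2 A - B s)\<^sup>2 = q\<^sup>2\<close> leaves only \<open>2 A = B s\<close>, i.e. \<open>B\<^sup>2 = 4\<close>.\<close>
lemma sum_squares_eq_square_plus_4:
  fixes A B s q :: int
  assumes AB: "A^2 + B^2 = q" and sq: "s^2 + 4 = q" and B_even: "even B" and s_odd: "odd s"
    and cX: "coprime (A*s - 2*B) q" and cY: "coprime (2*A + B*s) q"
  shows "B = 2 \<or> B = -2"
proof -
  have A_odd: "odd A"
  proof
    assume "even A"
    hence "even (A^2 + B^2)" using B_even by simp
    moreover have "odd (s^2 + 4)" using s_odd by simp
    ultimately show False using AB sq by simp
  qed
  have q0: "q \<noteq> 0" using sq zero_le_power2[of s] by linarith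
  have A2: "A^2 = q - B^2" and s2: "s^2 = q - 4" using AB sq by simp_all
  have "(A*s + 2*B) * (A*s - 2*B) = A^2 * s^2 - 4 * B^2"
    by (simp add: algebra_simps power2_eq_square)
  also have "\<dots> = q * (q - 4 - B^2)" unfolding A2 s2 by (simp add: algebra_simps)
  finally have "(A*s + 2*B) * (A*s - 2*B) = q * (q - 4 - B^2)" .
  hence "q dvd A*s + 2*B" using cX
    by (metis coprime_commute coprime_dvd_mult_left_iff dvd_triv_left)
  then obtain x where x: "A*s + 2*B = q * x" by blast
  have "(2*A - B*s) * (2*A + B*s) = 4 * A^2 - B^2 * s^2"
    by (simp add: algebra_simps power2_eq_square)
  also have "\<dots> = q * (4 - B^2)" unfolding A2 s2 by (simp add: algebra_simps)
  finally have "(2*A - B*s) * (2*A + B*s) = q * (4 - B^2)" .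
  hence "q dvd 2*A - B*s" using cY
    by (metis coprime_commute coprime_dvd_mult_left_iff dvd_triv_left)
  then obtain y where y: "2*A - B*s = q * y" by blast
  have "(A*s + 2*B)^2 + (2*A - B*s)^2 = (A^2 + B^2) * (s^2 + 4)"
    by (simp add: algebra_simps power2_eq_square)
  hence "q^2 * (x^2 + y^2) = q^2 * 1" unfolding x y AB sq
    by (simp add: algebra_simps power2_eq_square)
  hence xy: "x^2 + y^2 = 1" using q0 by simp
  have "x = 0 \<or> y = 0"
    using xy zero_less_power2[of x] zero_less_power2[of y] by linarith
  thus ?thesis
  proof
    assume "x = 0"
    hence "A*s = - 2*B" using x by simp
    moreover have "odd (A*s)" using A_odd s_odd by simp
    ultimately show ?thesis by simp
  next
    assume "y = 0"
    hence A2s: "(2*A)^2 = B^2 * s^2" using y by (simp add: power_mult_distrib)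
    have "4 * q = (2*A)^2 + 4 * B^2" using AB by (simp add: power_mult_distrib)
    also have "\<dots> = B^2 * q" unfolding A2s sq[symmetric] by (simp add: algebra_simps)
    finally have "4 * q = B^2 * q" .
    hence "B^2 = 2^2" using q0 by simp
    thus ?thesis using power2_eq_iff by blast
  qed
qed

lemma sum_product_trinomials:
  fixes a1 a2 a3 b1 b2 b3 :: "'b \<Rightarrow> 'c::comm_ring"
  shows "(\<Sum>e\<in>A. (a1 e + a2 e + a3 e) * (b1 e + b2 e + b3 e)) =
    (\<Sum>e\<in>A. a1 e * b1 e) + (\<Sum>e\<in>A. a1 e * b2 e) + (\<Sum>e\<in>A. a1 e * b3 e) +
    (\<Sum>e\<in>A. a2 e * b1 e) + (\<Sum>e\<in>A. a2 e * b2 e) + (\<Sum>e\<in>A. a2 e * b3 e) +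
    (\<Sum>e\<in>A. a3 e * b1 e) + (\<Sum>e\<in>A. a3 e * b2 e) + (\<Sum>e\<in>A. a3 e * b3 e)"
  by (simp add: distrib_left distrib_right sum.distrib add_ac)

lemma sum_scaled_product: "(\<Sum>e\<in>A. (a * f e) * (b * h e)) = a * b * (\<Sum>e\<in>A. f e * h e)"
  for a b :: "'c::comm_ring"
  by (simp add: sum_distrib_left mult_ac)

lemma of_nat_card_eq_sum_indicator:
  "of_nat (card {e::'a::finite. P e}) = (\<Sum>e\<in>UNIV. if P e then 1 else (0::complex))"
  by (simp add: sum.If_cases Int_def)

lemma power_times_one_minus_power:
  "(x::'b::comm_ring_1) ^ a * (1 - x) ^ a = (\<Sum>k\<le>a. of_nat (a choose k) * (-1) ^ k * x ^ (a + k))"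
proof -
  have "(1 - x) ^ a = (- x + 1) ^ a" by simp
  also have "\<dots> = (\<Sum>k\<le>a. of_nat (a choose k) * (- x) ^ k * 1 ^ (a - k))" by (rule binomial_ring)
  finally have "x ^ a * (1 - x) ^ a = x ^ a * (\<Sum>k\<le>a. of_nat (a choose k) * (- x) ^ k * 1 ^ (a - k))"
    by simp
  also have "\<dots> = (\<Sum>k\<le>a. x ^ a * (of_nat (a choose k) * (- x) ^ k * 1 ^ (a - k)))"
    by (rule sum_distrib_left)
  also have "\<dots> = (\<Sum>k\<le>a. of_nat (a choose k) * (-1) ^ k * x ^ (a + k))"
  proof (rule sum.cong[OF refl])
    fix k
    have "(- x) ^ k = (-1) ^ k * x ^ k" by (rule power_minus)
    thus "x ^ a * (of_nat (a choose k) * (- x) ^ k * 1 ^ (a - k)) = of_nat (a choose k) * (-1) ^ k * x ^ (a + k)"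
      by (simp only: power_add power_one mult_1_right) (simp only: mult_ac)
  qed
  finally show ?thesis .
qed

section \<open>The cyclotomic tournament\<close>

lemma tournament_subset: "tournament A V \<Longrightarrow> S \<subseteq> V \<Longrightarrow> tournament A S"
  unfolding tournament_def by (auto intro: finite_subset)

locale cyclotomic_tournament =
  fixes g :: "'a::{finite,field}"
  assumes card_mod_8: "CARD('a) mod 8 = 5"
    and primitive: "primitive_element g"
begin

definition n :: nat where "n = CARD('a) - 1"
definition m :: nat where "m = n div 4"

lemma card_ge_5: "CARD('a) \<ge> 5" using card_mod_8 by presburger
lemma n_eq_4m: "n = 4 * m" using card_mod_8 unfolding n_def m_def by presburger
lemma m_odd: "odd m" using card_mod_8 unfolding n_def m_def by presburger
lemma m_pos: "m > 0" using m_odd by (intro Nat.gr0I) auto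
lemma card_eq_4m_1: "CARD('a) = 4 * m + 1" using n_eq_4m card_ge_5 unfolding n_def by simp

lemma g_nonzero: "g \<noteq> 0" using primitive by (simp add: primitive_element_def)

lemma power_n_eq_1: "(x::'a) \<noteq> 0 \<Longrightarrow> x ^ n = 1"
  using power_CARD_minus_1_eq_1[of x] by (simp add: n_def)

lemma g_power_mod_n: "g ^ k = g ^ (k mod n)"
proof -
  have "g ^ k = g ^ (n * (k div n) + k mod n)" by simp
  also have "\<dots> = (g ^ n) ^ (k div n) * g ^ (k mod n)"
    by (simp only: power_add power_mult)
  finally have "g ^ k = (g ^ n) ^ (k div n) * g ^ (k mod n)" .
  thus ?thesis using power_n_eq_1[OF g_nonzero] by simp
qed

lemma g_power_surj: "x \<noteq> 0 \<Longrightarrow> \<exists>k<n. g ^ k = x"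
proof -
  assume "x \<noteq> 0"
  then obtain k :: nat where "x = g ^ k" using primitive by (auto simp: primitive_element_def)
  moreover have "k mod n < n" using n_eq_4m m_pos by simp
  ultimately show ?thesis using g_power_mod_n[of k] by (intro exI[of _ "k mod n"]) simp
qed

lemma g_power_image: "(\<lambda>k. g ^ k) ` {..<n} = UNIV - {0}"
proof (intro equalityI subsetI)
  fix x assume "x \<in> (\<lambda>k. g ^ k) ` {..<n}" thus "x \<in> UNIV - {0}" using g_nonzero by auto
next
  fix x :: 'a assume "x \<in> UNIV - {0}"
  then obtain k where "k < n" "g ^ k = x" using g_power_surj by blast
  thus "x \<in> (\<lambda>k. g ^ k) ` {..<n}" by blast
qed

lemma inj_on_g_power: "inj_on (\<lambda>k. g ^ k) {..<n}"
proof (rule eq_card_imp_inj_on)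
  show "card ((\<lambda>k. g ^ k) ` {..<n}) = card {..<n}"
    unfolding g_power_image by (simp add: n_def card_Diff_subset)
qed simp

lemma g_power_eq_iff: "g ^ a = g ^ b \<longleftrightarrow> a mod n = b mod n"
proof -
  have nn: "n > 0" using n_eq_4m m_pos by simp
  have "g ^ a = g ^ b \<longleftrightarrow> g ^ (a mod n) = g ^ (b mod n)" using g_power_mod_n by metis
  also have "\<dots> \<longleftrightarrow> a mod n = b mod n"
    using inj_onD[OF inj_on_g_power, of "a mod n" "b mod n"] nn by auto
  finally show ?thesis .
qed

definition dlog :: "'a \<Rightarrow> nat" where "dlog x = (THE k. k < n \<and> g ^ k = x)"

lemma dlog_prop: assumes "x \<noteq> 0" shows "dlog x < n" "g ^ dlog x = x"
proof -
  obtain k where k: "k < n" "g ^ k = x" using g_power_surj[OF assms] by blast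
  have "dlog x = k" unfolding dlog_def
    by (rule the_equality) (use k inj_onD[OF inj_on_g_power] in auto)
  thus "dlog x < n" "g ^ dlog x = x" using k by auto
qed

lemma g_power_eq_iff_dlog: "x \<noteq> 0 \<Longrightarrow> g ^ k = x \<longleftrightarrow> k mod n = dlog x"
  using dlog_prop[of x] g_power_eq_iff[of k "dlog x"] by auto

definition cyc_index :: "'a \<Rightarrow> nat" where "cyc_index x = dlog x mod 4"

lemma cyc_index_less_4: "cyc_index x < 4" by (simp add: cyc_index_def)

lemma cyc_index_g_power: assumes "x \<noteq> 0" "g ^ k = x" shows "cyc_index x = k mod 4"
proof -
  have "k mod n = dlog x" using g_power_eq_iff_dlog assms by blast
  hence "k mod n mod 4 = dlog x mod 4" by simp
  moreover have "(4::nat) dvd n" by (simp add: n_eq_4m)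
  ultimately show ?thesis unfolding cyc_index_def using mod_mod_cancel[of 4 n k] by simp
qed

lemma cyc_index_mult: assumes "x \<noteq> 0" "y \<noteq> 0"
  shows "cyc_index (x * y) = (cyc_index x + cyc_index y) mod 4"
proof -
  have "g ^ (dlog x + dlog y) = x * y" using dlog_prop assms by (simp add: power_add)
  hence "cyc_index (x * y) = (dlog x + dlog y) mod 4"
    using cyc_index_g_power[of "x*y" "dlog x + dlog y"] assms by simp
  thus ?thesis by (simp add: cyc_index_def mod_add_eq)
qed

lemma cyc_index_1: "cyc_index 1 = 0" using cyc_index_g_power[of 1 0] by simp
lemma cyc_index_g: "cyc_index g = 1" using cyc_index_g_power[of g 1] g_nonzero by simp

definition iota :: 'a where "iota = g ^ m"

lemma g_power_2m: "g ^ (2 * m) = -1"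
proof -
  have "(g ^ (2 * m)) ^ 2 = g ^ n" unfolding n_eq_4m power_mult[symmetric]
    by (simp add: mult.commute)
  hence "(g ^ (2 * m)) ^ 2 = 1" using power_n_eq_1[OF g_nonzero] by simp
  hence "g ^ (2 * m) = 1 \<or> g ^ (2 * m) = -1" by (simp add: power2_eq_1_iff)
  moreover have "g ^ (2 * m) \<noteq> g ^ 0"
    unfolding g_power_eq_iff using m_pos by (simp add: n_eq_4m)
  ultimately show ?thesis by simp
qed

lemma iota_square: "iota ^ 2 = -1" using g_power_2m unfolding iota_def power_mult[symmetric]
  by (simp add: mult.commute)
lemma iota_power_4: "iota ^ 4 = 1"
proof -
  have "iota ^ 4 = (iota ^ 2) ^ 2" by (simp flip: power_mult)
  thus ?thesis using iota_square by simp
qed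

lemma cyc_index_minus_1: "cyc_index (-1) = 2"
proof -
  have "cyc_index (-1) = (2 * m) mod 4" using cyc_index_g_power[of "-1" "2*m", OF _ g_power_2m]
    by simp
  also have "\<dots> = 2"
  proof -
    obtain k where "m = 2 * k + 1" using m_odd oddE by blast
    thus ?thesis by presburger
  qed
  finally show ?thesis .
qed

lemma cyc_index_uminus: "x \<noteq> 0 \<Longrightarrow> cyc_index (- x) = (cyc_index x + 2) mod 4"
  using cyc_index_mult[of "-1" x] cyc_index_minus_1 by (simp add: add.commute)

lemma cyc_index_cases: "cyc_index x = 0 \<or> cyc_index x = 1 \<or> cyc_index x = 2 \<or> cyc_index x = 3"
  using cyc_index_less_4[of x] by linarith

lemma cyc_C0_eq: "cyc_C0 = {y::'a. y \<noteq> 0 \<and> cyc_index y = 0}"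
proof (intro equalityI subsetI)
  fix y :: 'a assume "y \<in> cyc_C0"
  then obtain x where x: "x \<noteq> 0" "y = x ^ 4" unfolding cyc_C0_def by blast
  have "g ^ (4 * dlog x) = x ^ 4" using dlog_prop[OF x(1)] by (simp add: power_mult mult.commute)
  hence "cyc_index (x ^ 4) = 0" using cyc_index_g_power[of "x^4" "4 * dlog x"] x by simp
  thus "y \<in> {y. y \<noteq> 0 \<and> cyc_index y = 0}" using x by simp
next
  fix y :: 'a assume "y \<in> {y. y \<noteq> 0 \<and> cyc_index y = 0}"
  hence y: "y \<noteq> 0" "cyc_index y = 0" by auto
  then obtain j where "dlog y = 4 * j" unfolding cyc_index_def by blast
  hence "y = (g ^ j) ^ 4" using dlog_prop[OF y(1)] by (simp add: power_mult mult.commute)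
  thus "y \<in> cyc_C0" unfolding cyc_C0_def using g_nonzero by auto
qed

lemma cyc_class_0_eq: "cyc_class g 0 = {y::'a. y \<noteq> 0 \<and> cyc_index y = 0}"
  unfolding cyc_class_def cyc_C0_eq[symmetric] by simp

lemma cyc_class_1_eq: "cyc_class g 1 = {y::'a. y \<noteq> 0 \<and> cyc_index y = 1}"
proof (intro equalityI subsetI)
  fix y assume "y \<in> cyc_class g 1"
  then obtain c where c: "c \<noteq> 0" "cyc_index c = 0" "y = g * c" unfolding cyc_class_def cyc_C0_eq
    by auto
  thus "y \<in> {y. y \<noteq> 0 \<and> cyc_index y = 1}" using c cyc_index_mult[of g c] g_nonzero cyc_index_g
    by simp
next
  fix y :: 'a assume "y \<in> {y. y \<noteq> 0 \<and> cyc_index y = 1}"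
  hence y: "y \<noteq> 0" "cyc_index y = 1" by auto
  define c where "c = y / g"
  have c: "c \<noteq> 0" "y = g * c" using y g_nonzero by (auto simp: c_def)
  have "cyc_index c = 0"
    using cyc_index_mult[of g c] c g_nonzero cyc_index_g y cyc_index_cases[of c] by auto
  thus "y \<in> cyc_class g 1" unfolding cyc_class_def cyc_C0_eq using c by auto
qed

lemma mem_D_iff: "x \<in> cyc_D g \<longleftrightarrow> x \<noteq> 0 \<and> cyc_index x \<le> 1"
  unfolding cyc_D_def cyc_class_1_eq cyc_class_0_eq by auto

lemma uminus_mem_D_iff: "x \<noteq> 0 \<Longrightarrow> (- x \<in> cyc_D g) \<longleftrightarrow> x \<notin> cyc_D g"
  using cyc_index_uminus[of x] cyc_index_cases[of x] unfolding mem_D_iff by auto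

lemma power_m_eq_iota_power: "x \<noteq> 0 \<Longrightarrow> x ^ m = iota ^ cyc_index x"
proof -
  assume x: "x \<noteq> 0"
  have "x ^ m = iota ^ dlog x" using dlog_prop[OF x]
    by (metis iota_def mult.commute power_mult)
  also have "\<dots> = iota ^ (4 * (dlog x div 4) + cyc_index x)" by (simp add: cyc_index_def)
  also have "\<dots> = iota ^ cyc_index x" by (simp add: power_add power_mult iota_power_4)
  finally show ?thesis .
qed

section \<open>Cyclotomic numbers\<close>

abbreviation D where "D \<equiv> cyc_D g"

definition diff_count :: "'a \<Rightarrow> nat" where "diff_count d = card {e. e \<in> D \<and> e - d \<in> D}"
definition sum_count :: "'a \<Rightarrow> nat" where "sum_count d = card {e. e \<in> D \<and> d - e \<in> D}"

lemma zero_notin_D: "0 \<notin> D" by (simp add: mem_D_iff)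

lemma tournament_cyc_arc: "tournament (cyc_arc g) UNIV"
  unfolding tournament_def cyc_arc_def
proof (intro conjI ballI impI)
  fix x y :: 'a assume "x \<noteq> y"
  hence "x - y \<noteq> 0" by simp
  from uminus_mem_D_iff[OF this] show "(x - y \<in> D) = (y - x \<notin> D)" by (simp add: minus_diff_eq)
qed (auto simp: zero_notin_D)

lemma card_D: "card D = 2 * m"
proof -
  have un: "UNIV - {0} = D \<union> uminus ` D"
  proof (intro equalityI subsetI)
    fix x :: 'a assume "x \<in> UNIV - {0}"
    hence x: "x \<noteq> 0" by simp
    show "x \<in> D \<union> uminus ` D"
    proof (cases "x \<in> D")
      case False
      hence "- x \<in> D" using uminus_mem_D_iff[OF x] by simp
      thus ?thesis by (auto intro: image_eqI[of _ _ "- x"])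
    qed simp
  qed (auto simp: zero_notin_D)
  have dis: "D \<inter> uminus ` D = {}"
  proof (rule ccontr)
    assume "D \<inter> uminus ` D \<noteq> {}"
    then obtain y where y: "- y \<in> D" "y \<in> D" by auto
    hence "y \<noteq> 0" using zero_notin_D by auto
    with uminus_mem_D_iff[of y] y show False by simp
  qed
  have "card (UNIV - {0::'a}) = card D + card (uminus ` D)"
    unfolding un by (rule card_Un_disjoint) (use dis in auto)
  also have "card (uminus ` D) = card D" by (rule card_image) (simp add: inj_on_def)
  finally have "n = 2 * card D" by (simp add: n_def card_Diff_subset)
  thus ?thesis using n_eq_4m by simp
qed

lemma out_nbrs_cyc_arc: "out_nbrs (cyc_arc g) UNIV x = {y. x - y \<in> D}"
  by (simp add: out_nbrs_def cyc_arc_def)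
lemma in_nbrs_cyc_arc: "in_nbrs (cyc_arc g) UNIV x = {y. y - x \<in> D}"
  by (simp add: in_nbrs_def cyc_arc_def)

lemma card_out_nbrs: "card (out_nbrs (cyc_arc g) UNIV x) = 2 * m"
  using card_Collect_diff_left[of "\<lambda>e. e \<in> D" x] card_D by (simp add: out_nbrs_cyc_arc)
lemma card_in_nbrs: "card (in_nbrs (cyc_arc g) UNIV x) = 2 * m"
  using card_Collect_diff_right[of "\<lambda>e. e \<in> D" x] card_D by (simp add: in_nbrs_cyc_arc)

lemma regular_tournament_cyc_arc: "regular_tournament (cyc_arc g) UNIV"
  unfolding regular_tournament_def outdeg_def
  using tournament_cyc_arc card_out_nbrs card_eq_4m_1 by simp

lemma outdeg_out_nbrs:
  assumes "w \<in> out_nbrs (cyc_arc g) UNIV x"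
  shows "outdeg (cyc_arc g) (out_nbrs (cyc_arc g) UNIV x) w = diff_count (x - w)"
proof -
  have "outdeg (cyc_arc g) (out_nbrs (cyc_arc g) UNIV x) w = card {z. x - z \<in> D \<and> w - z \<in> D}"
    by (simp add: outdeg_def out_nbrs_def cyc_arc_def)
  also have "\<dots> = card {e. e \<in> D \<and> e - (x - w) \<in> D}"
    using card_Collect_diff_left[of "\<lambda>e. e \<in> D \<and> e - (x - w) \<in> D" x] by (simp add: algebra_simps)
  finally show ?thesis by (simp add: diff_count_def)
qed

lemma outdeg_in_nbrs:
  assumes "w \<in> in_nbrs (cyc_arc g) UNIV x"
  shows "outdeg (cyc_arc g) (in_nbrs (cyc_arc g) UNIV x) w = sum_count (w - x)"
proof -
  have "outdeg (cyc_arc g) (in_nbrs (cyc_arc g) UNIV x) w = card {z. z - x \<in> D \<and> w - z \<in> D}"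
    by (simp add: outdeg_def in_nbrs_def out_nbrs_def cyc_arc_def)
  also have "\<dots> = card {e. e \<in> D \<and> (w - x) - e \<in> D}"
    using card_Collect_diff_right[of "\<lambda>e. e \<in> D \<and> (w - x) - e \<in> D" x] by (simp add: algebra_simps)
  finally show ?thesis by (simp add: sum_count_def)
qed

lemma diff_count_plus_sum_count: assumes d: "d \<in> D" shows "diff_count d + sum_count d = 2 * m - 1"
proof -
  have un: "{e. e \<in> D \<and> e - d \<in> D} \<union> {e. e \<in> D \<and> d - e \<in> D} = D - {d}"
  proof (intro equalityI subsetI)
    fix e assume "e \<in> D - {d}"
    hence "e - d \<noteq> 0" "e \<in> D" by auto
    thus "e \<in> {e. e \<in> D \<and> e - d \<in> D} \<union> {e. e \<in> D \<and> d - e \<in> D}"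
      using uminus_mem_D_iff[of "e - d"] by (auto simp: minus_diff_eq)
  qed (auto simp: zero_notin_D)
  have dis: "{e. e \<in> D \<and> e - d \<in> D} \<inter> {e. e \<in> D \<and> d - e \<in> D} = {}"
  proof (rule ccontr)
    assume "{e. e \<in> D \<and> e - d \<in> D} \<inter> {e. e \<in> D \<and> d - e \<in> D} \<noteq> {}"
    then obtain e where y: "e - d \<in> D" "- (e - d) \<in> D" by auto
    hence "e - d \<noteq> 0" using zero_notin_D by auto
    with uminus_mem_D_iff[of "e - d"] y show False by simp
  qed
  have "diff_count d + sum_count d = card (D - {d})"
    unfolding diff_count_def sum_count_def un[symmetric]
      by (rule card_Un_disjoint[symmetric]) (use dis in auto)
  also have "\<dots> = 2 * m - 1" using d card_D by simp
  finally show ?thesis .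
qed

lemma near_regular_out_nbrs_iff:
  "near_regular (cyc_arc g) (out_nbrs (cyc_arc g) UNIV x) \<longleftrightarrow>
     (\<forall>d\<in>D. diff_count d = m \<or> diff_count d = m - 1)"
proof -
  have "tournament (cyc_arc g) (out_nbrs (cyc_arc g) UNIV x)"
    by (rule tournament_subset[OF tournament_cyc_arc]) simp
  moreover have "(\<forall>w\<in>out_nbrs (cyc_arc g) UNIV x. diff_count (x - w) = m \<or> diff_count (x - w) = m - 1)
      \<longleftrightarrow> (\<forall>d\<in>D. diff_count d = m \<or> diff_count d = m - 1)"
    unfolding out_nbrs_cyc_arc
  proof (intro iffI ballI)
    fix d assume H: "\<forall>w\<in>{y. x - y \<in> D}. diff_count (x - w) = m \<or> diff_count (x - w) = m - 1"
      and "d \<in> D"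
    hence "x - d \<in> {y. x - y \<in> D}" by simp
    from bspec[OF H this] show "diff_count d = m \<or> diff_count d = m - 1" by simp
  qed simp
  ultimately show ?thesis
    unfolding near_regular_def card_out_nbrs by (simp add: outdeg_out_nbrs cong: ball_cong)
qed

text \<open>In-neighbourhoods are controlled by \<open>sum_count = 2 m - 1 - diff_count\<close>.\<close>
lemma near_regular_in_nbrs:
  assumes "\<forall>d\<in>D. diff_count d = m \<or> diff_count d = m - 1"
  shows "near_regular (cyc_arc g) (in_nbrs (cyc_arc g) UNIV x)"
  unfolding near_regular_def card_in_nbrs
proof (intro conjI ballI)
  show "tournament (cyc_arc g) (in_nbrs (cyc_arc g) UNIV x)"
    by (rule tournament_subset[OF tournament_cyc_arc]) simp
next
  fix w assume w: "w \<in> in_nbrs (cyc_arc g) UNIV x"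
  hence d: "w - x \<in> D" by (simp add: in_nbrs_cyc_arc)
  have "sum_count (w - x) = m \<or> sum_count (w - x) = m - 1"
    using diff_count_plus_sum_count[OF d] assms d m_pos by fastforce
  thus "outdeg (cyc_arc g) (in_nbrs (cyc_arc g) UNIV x) w = 2 * m div 2 \<or>
        outdeg (cyc_arc g) (in_nbrs (cyc_arc g) UNIV x) w = 2 * m div 2 - 1"
    using outdeg_in_nbrs[OF w] by simp
qed simp

lemma ndr_iff_diff_count:
  "nearly_doubly_regular (cyc_arc g) UNIV \<longleftrightarrow> (\<forall>d\<in>D. diff_count d = m \<or> diff_count d = m - 1)"
  using regular_tournament_cyc_arc card_eq_4m_1 near_regular_out_nbrs_iff near_regular_in_nbrs
  unfolding nearly_doubly_regular_def by auto

section \<open>The quartic character and its Jacobi sum\<close>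

definition chi :: "'a \<Rightarrow> complex" where "chi x = (if x = 0 then 0 else \<i> ^ cyc_index x)"

lemma chi_0 [simp]: "chi 0 = 0" by (simp add: chi_def)

lemma chi_mult: "chi (x * y) = chi x * chi y"
proof (cases "x = 0 \<or> y = 0")
  case False
  hence "chi (x * y) = \<i> ^ ((cyc_index x + cyc_index y) mod 4)"
    by (simp add: chi_def cyc_index_mult)
  also have "\<dots> = chi x * chi y" using False by (simp add: chi_def power_add i_power_mod_4)
  finally show ?thesis .
qed (auto simp: chi_def)

lemma chi_1 [simp]: "chi 1 = 1" by (simp add: chi_def cyc_index_1)
lemma chi_minus_1: "chi (-1) = -1" by (simp add: chi_def cyc_index_minus_1)
lemma chi_g: "chi g = \<i>" using g_nonzero by (simp add: chi_def cyc_index_g)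
lemma chi_uminus: "chi (- x) = - chi x" using chi_mult[of "-1" x] chi_minus_1 by simp

lemma chi_nonzero: "x \<noteq> 0 \<Longrightarrow> chi x \<noteq> 0" by (simp add: chi_def)

lemma cnj_chi_mult: "cnj (chi x) * chi x = (if x = 0 then 0 else 1)"
proof -
  have "cnj (\<i> ^ k) * \<i> ^ k = 1" for k
  proof -
    have "cnj (\<i> ^ k) * \<i> ^ k = (- \<i> * \<i>) ^ k"
      by (simp only: complex_cnj_power complex_cnj_i power_mult_distrib)
    thus ?thesis by simp
  qed
  thus ?thesis by (simp add: chi_def)
qed

lemma cnj_chi: "cnj (chi x) = chi (inverse x)"
proof (cases "x = 0")
  case False
  have "chi (inverse x) * chi x = 1" using False by (simp flip: chi_mult)
  moreover have "cnj (chi x) * chi x = 1" using False by (simp add: cnj_chi_mult)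
  ultimately show ?thesis using chi_nonzero[OF False] by (metis mult_cancel_right)
qed simp

lemma sum_chi: "(\<Sum>x\<in>UNIV. chi x) = 0"
proof -
  have "(\<Sum>x\<in>UNIV. chi x) = (\<Sum>x\<in>UNIV. chi (g * x))" using sum_UNIV_scale[OF g_nonzero, of chi]
    by simp
  also have "\<dots> = \<i> * (\<Sum>x\<in>UNIV. chi x)" by (simp add: chi_mult chi_g sum_distrib_left)
  finally have "(1 - \<i>) * (\<Sum>x\<in>UNIV. chi x) = 0" by (simp add: algebra_simps)
  thus ?thesis by simp
qed

lemma sum_chi_square: "(\<Sum>x\<in>UNIV. chi x ^ 2) = 0"
proof -
  have "(\<Sum>x\<in>UNIV. chi x ^ 2) = (\<Sum>x\<in>UNIV. chi (g * x) ^ 2)"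
    using sum_UNIV_scale[OF g_nonzero, of "\<lambda>x. chi x ^ 2"] by simp
  also have "\<dots> = - (\<Sum>x\<in>UNIV. chi x ^ 2)" by (simp add: chi_mult chi_g power_mult_distrib sum_negf)
  finally show ?thesis by simp
qed

lemma sum_chi_remove: "(\<Sum>x\<in>UNIV - {a}. chi x) = - chi a"
  using sum_chi by (simp add: sum_diff1)

definition J :: complex where "J = (\<Sum>y\<in>UNIV. chi y * chi (1 - y))"

lemma sum_chi_cnj_chi_one_minus: "(\<Sum>y\<in>UNIV. chi y * cnj (chi (1 - y))) = 1"
proof -
  have "(\<Sum>y\<in>UNIV. chi y * cnj (chi (1 - y))) = (\<Sum>y\<in>UNIV. chi (y / (1 - y)))"
    by (simp add: cnj_chi divide_inverse chi_mult)
  also have "\<dots> = (\<Sum>y\<in>UNIV - {1}. chi (y / (1 - y)))"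
    by (simp add: sum_diff1)
  also have "\<dots> = (\<Sum>t\<in>UNIV - {-1}. chi t)"
  proof (rule sum.reindex_bij_witness[of _ "\<lambda>t. t / (1 + t)" "\<lambda>y. y / (1 - y)"])
    fix t :: 'a assume "t \<in> UNIV - {-1}"
    hence t: "1 + t \<noteq> 0" by (metis DiffD2 add.commute add_eq_0_iff2 insertI1)
    show "t / (1 + t) / (1 - t / (1 + t)) = t" using t by (simp add: field_simps)
    show "t / (1 + t) \<in> UNIV - {1}" using t by (simp add: field_simps)
  next
    fix y :: 'a assume "y \<in> UNIV - {1}"
    hence y: "1 - y \<noteq> 0" by simp
    show "y / (1 - y) / (1 + y / (1 - y)) = y" using y by (simp add: field_simps)
    show "y / (1 - y) \<in> UNIV - {-1}" using y by (simp add: field_simps)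
  qed simp
  also have "\<dots> = 1" by (simp add: sum_chi_remove chi_minus_1)
  finally show ?thesis .
qed

definition T :: "'a \<Rightarrow> complex" where "T u = (\<Sum>y\<in>UNIV - {0,1}. chi ((1 - u * y) / (1 - y)))"

lemma T_1: "T 1 = of_nat CARD('a) - 2"
proof -
  have "T 1 = (\<Sum>y\<in>UNIV - {0::'a,1}. 1)"
    unfolding T_def by (rule sum.cong) auto
  hence "T 1 = of_nat (card (UNIV - {0::'a, 1}))" by simp
  also have "card (UNIV - {0::'a, 1}) = CARD('a) - 2" by (simp add: card_Diff_subset)
  also have "of_nat (CARD('a) - 2) = (of_nat CARD('a) - 2 :: complex)" using card_ge_5
    by (simp add: of_nat_diff)
  finally show ?thesis .
qed

lemma T_neq_1: assumes u: "u \<noteq> 1" shows "T u = - 1 - chi u"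
proof -
  have "T u = (\<Sum>w\<in>UNIV - {1, u}. chi w)"
    unfolding T_def using sum.reindex_bij_betw[OF bij_betw_fractional_linear[OF u], of chi] by simp
  also have "\<dots> = (\<Sum>w\<in>UNIV - {1} - {u}. chi w)" by (rule sum.cong) auto
  also have "\<dots> = - 1 - chi u" using u by (simp add: sum_diff1 sum_chi_remove)
  finally show ?thesis .
qed

lemma J_mult_cnj_J: "J * cnj J = of_nat CARD('a)"
proof -
  have "J * cnj J = (\<Sum>x\<in>UNIV. \<Sum>y\<in>UNIV. chi x * chi (1 - x) * (chi (inverse y) * chi (inverse (1 - y))))"
    unfolding J_def by (simp add: sum_product cnj_chi)
  also have "\<dots> = (\<Sum>y\<in>UNIV. \<Sum>x\<in>UNIV. chi (x * inverse y) * chi ((1 - x) * inverse (1 - y)))"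
    by (subst sum.swap) (simp add: chi_mult mult_ac)
  also have "\<dots> = (\<Sum>y\<in>UNIV - {0,1}. \<Sum>x\<in>UNIV. chi (x * inverse y) * chi ((1 - x) * inverse (1 - y)))"
    by (rule sum.mono_neutral_right) auto
  also have "\<dots> = (\<Sum>y\<in>UNIV - {0,1}. \<Sum>u\<in>UNIV. chi u * chi ((1 - u * y) / (1 - y)))"
  proof (rule sum.cong[OF refl])
    fix y :: 'a assume "y \<in> UNIV - {0, 1}"
    hence y: "y \<noteq> 0" by auto
    have "(\<Sum>x\<in>UNIV. chi (x * inverse y) * chi ((1 - x) * inverse (1 - y)))
        = (\<Sum>u\<in>UNIV. chi (y * u * inverse y) * chi ((1 - y * u) * inverse (1 - y)))"
      using sum_UNIV_scale[OF y, of "\<lambda>x. chi (x * inverse y) * chi ((1 - x) * inverse (1 - y))"]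
        by simp
    also have "\<dots> = (\<Sum>u\<in>UNIV. chi u * chi ((1 - u * y) / (1 - y)))"
      using y by (simp add: divide_inverse mult_ac)
    finally show "(\<Sum>x\<in>UNIV. chi (x * inverse y) * chi ((1 - x) * inverse (1 - y))) = \<dots>" .
  qed
  also have "\<dots> = (\<Sum>u\<in>UNIV. chi u * T u)"
    unfolding T_def by (subst sum.swap) (simp add: sum_distrib_left)
  also have "\<dots> = chi 1 * T 1 + (\<Sum>u\<in>UNIV - {1}. chi u * T u)"
    by (simp add: sum.remove[of UNIV 1])
  also have "(\<Sum>u\<in>UNIV - {1}. chi u * T u) = (\<Sum>u\<in>UNIV - {1}. - chi u - chi u ^ 2)"
    by (rule sum.cong) (auto simp: T_neq_1 algebra_simps power2_eq_square)
  also have "\<dots> = - (\<Sum>u\<in>UNIV - {1}. chi u) - (\<Sum>u\<in>UNIV - {1}. chi u ^ 2)"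
    by (simp add: sum_subtractf sum_negf)
  also have "(\<Sum>u\<in>UNIV - {1}. chi u ^ 2) = - 1"
    using sum_chi_square by (simp add: sum_diff1)
  finally show ?thesis by (simp add: T_1 sum_chi_remove)
qed

section \<open>Cyclotomic numbers via the Jacobi sum\<close>

definition nu :: "'a \<Rightarrow> complex" where "nu x = (if x = 0 then 0 else 1)"
definition ind_D :: "'a \<Rightarrow> complex" where "ind_D x = (if x \<in> D then 1 else 0)"
abbreviation \<alpha> :: complex where "\<alpha> \<equiv> 1 - \<i>"

lemma ind_D_decomposition: "4 * ind_D x = 2 * nu x + \<alpha> * chi x + cnj \<alpha> * cnj (chi x)"
proof (cases "x = 0")
  case True thus ?thesis by (simp add: ind_D_def nu_def zero_notin_D)
next
  case False
  consider "cyc_index x = 0" | "cyc_index x = 1" | "cyc_index x = 2" | "cyc_index x = 3"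
    using cyc_index_cases[of x] by auto
  thus ?thesis
  proof cases
    case 1 thus ?thesis using False by (simp add: ind_D_def nu_def chi_def mem_D_iff complex_eq_iff)
  next
    case 2 thus ?thesis using False by (simp add: ind_D_def nu_def chi_def mem_D_iff complex_eq_iff)
  next
    case 3 thus ?thesis using False
      by (simp add: ind_D_def nu_def chi_def mem_D_iff complex_eq_iff power2_eq_square)
  next
    case 4 thus ?thesis using False
      by (simp add: ind_D_def nu_def chi_def mem_D_iff complex_eq_iff power3_eq_cube)
  qed
qed

lemma sum_nu_left: "(\<Sum>e\<in>UNIV. nu e * f e) = (\<Sum>e\<in>UNIV. f e) - f (0::'a)"
proof -
  have "(\<Sum>e\<in>UNIV. nu e * f e) = nu 0 * f 0 + (\<Sum>e\<in>UNIV - {0}. nu e * f e)"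
    by (simp add: sum.remove[of UNIV 0])
  also have "(\<Sum>e\<in>UNIV - {0}. nu e * f e) = (\<Sum>e\<in>UNIV - {0}. f e)"
    by (rule sum.cong) (auto simp: nu_def)
  also have "\<dots> = (\<Sum>e\<in>UNIV. f e) - f 0" by (simp add: sum_diff1)
  finally show ?thesis by (simp add: nu_def)
qed

lemma sum_nu_right: "(\<Sum>e\<in>UNIV. f e * nu (e - d)) = (\<Sum>e\<in>UNIV. f e) - f (d::'a)"
proof -
  have "(\<Sum>e\<in>UNIV. f e * nu (e - d)) = f d * nu (d - d) + (\<Sum>e\<in>UNIV - {d}. f e * nu (e - d))"
    by (simp add: sum.remove[of UNIV d])
  also have "(\<Sum>e\<in>UNIV - {d}. f e * nu (e - d)) = (\<Sum>e\<in>UNIV - {d}. f e)"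
    by (rule sum.cong) (auto simp: nu_def)
  also have "\<dots> = (\<Sum>e\<in>UNIV. f e) - f d" by (simp add: sum_diff1)
  finally show ?thesis by (simp add: nu_def)
qed

lemma sum_cnj_chi: "(\<Sum>x\<in>UNIV. cnj (chi x)) = 0"
  using sum_chi by (metis cnj_sum complex_cnj_zero)

lemma sum_nu: "(\<Sum>e\<in>UNIV. nu (e::'a)) = of_nat CARD('a) - 1"
  using sum_nu_left[of "\<lambda>_. 1"] by simp

context
  fixes d :: 'a assumes d: "d \<noteq> 0"
begin

lemma corr_nu_nu: "(\<Sum>e\<in>UNIV. nu e * nu (e - d)) = of_nat CARD('a) - 2"
  using sum_nu_left[of "\<lambda>e. nu (e - d)"] sum_UNIV_shift_diff[of nu d] sum_nu d by (simp add: nu_def)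

lemma corr_nu_chi: "(\<Sum>e\<in>UNIV. nu e * chi (e - d)) = chi d"
  using sum_nu_left[of "\<lambda>e. chi (e - d)"] sum_UNIV_shift_diff[of chi d] sum_chi
    by (simp add: chi_uminus)

lemma corr_nu_cnj_chi: "(\<Sum>e\<in>UNIV. nu e * cnj (chi (e - d))) = cnj (chi d)"
  using sum_nu_left[of "\<lambda>e. cnj (chi (e - d))"] sum_UNIV_shift_diff[of "\<lambda>x. cnj (chi x)" d] sum_cnj_chi
  by (simp add: chi_uminus)

lemma corr_chi_nu: "(\<Sum>e\<in>UNIV. chi e * nu (e - d)) = - chi d"
  using sum_nu_right[of chi d] sum_chi by simp

lemma corr_cnj_chi_nu: "(\<Sum>e\<in>UNIV. cnj (chi e) * nu (e - d)) = - cnj (chi d)"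
  using sum_nu_right[of "\<lambda>x. cnj (chi x)" d] sum_cnj_chi by simp

lemma corr_chi_chi: "(\<Sum>e\<in>UNIV. chi e * chi (e - d)) = - ((chi d)^2 * J)"
proof -
  have "(\<Sum>e\<in>UNIV. chi e * chi (e - d)) = (\<Sum>y\<in>UNIV. chi (d * y) * chi (d * y - d))"
    using sum_UNIV_scale[OF d, of "\<lambda>e. chi e * chi (e - d)"] by simp
  also have "\<dots> = (\<Sum>y\<in>UNIV. chi d ^ 2 * (- (chi y * chi (1 - y))))"
  proof (rule sum.cong[OF refl])
    fix y
    have "d * y - d = d * (- (1 - y))" by (simp add: algebra_simps)
    thus "chi (d * y) * chi (d * y - d) = chi d ^ 2 * (- (chi y * chi (1 - y)))"
      by (simp only: chi_mult chi_uminus) (simp add: power2_eq_square)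
  qed
  also have "\<dots> = - ((chi d)^2 * J)" unfolding J_def by (simp add: sum_distrib_left sum_negf)
  finally show ?thesis .
qed

lemma corr_cnj_chi_cnj_chi:
  "(\<Sum>e\<in>UNIV. cnj (chi e) * cnj (chi (e - d))) = - ((cnj (chi d))^2 * cnj J)"
proof -
  have "(\<Sum>e\<in>UNIV. cnj (chi e) * cnj (chi (e - d))) = cnj (\<Sum>e\<in>UNIV. chi e * chi (e - d))"
    by (simp add: cnj_sum)
  thus ?thesis by (simp add: corr_chi_chi)
qed

lemma corr_chi_cnj_chi: "(\<Sum>e\<in>UNIV. chi e * cnj (chi (e - d))) = - 1"
proof -
  have "(\<Sum>e\<in>UNIV. chi e * cnj (chi (e - d))) = (\<Sum>y\<in>UNIV. chi (d * y) * cnj (chi (d * y - d)))"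
    using sum_UNIV_scale[OF d, of "\<lambda>e. chi e * cnj (chi (e - d))"] by simp
  also have "\<dots> = (\<Sum>y\<in>UNIV. (cnj (chi d) * chi d) * (- (chi y * cnj (chi (1 - y)))))"
  proof (rule sum.cong[OF refl])
    fix y
    have "d * y - d = d * (- (1 - y))" by (simp add: algebra_simps)
    thus "chi (d * y) * cnj (chi (d * y - d)) = (cnj (chi d) * chi d) * (- (chi y * cnj (chi (1 - y))))"
      by (simp only: chi_mult chi_uminus complex_cnj_mult complex_cnj_minus) (simp add: algebra_simps)
  qed
  also have "\<dots> = - 1" using d by (simp add: cnj_chi_mult sum_negf sum_chi_cnj_chi_one_minus)
  finally show ?thesis .
qed

lemma corr_cnj_chi_chi: "(\<Sum>e\<in>UNIV. cnj (chi e) * chi (e - d)) = - 1"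
proof -
  have "(\<Sum>e\<in>UNIV. cnj (chi e) * chi (e - d)) = cnj (\<Sum>e\<in>UNIV. chi e * cnj (chi (e - d)))"
    by (simp add: cnj_sum)
  thus ?thesis by (simp add: corr_chi_cnj_chi)
qed

lemma diff_count_formula:
  "16 * of_nat (diff_count d) = 4 * of_nat CARD('a) - 12 + 2 * \<i> * (chi d)^2 * J - 2 * \<i> * (cnj (chi d))^2 * cnj J"
proof -
  have "of_nat (diff_count d) = (\<Sum>e\<in>UNIV. ind_D e * ind_D (e - d))"
  proof -
    have "(\<Sum>e\<in>UNIV. ind_D e * ind_D (e - d)) = (\<Sum>e\<in>UNIV. if e \<in> D \<and> e - d \<in> D then 1 else 0)"
      by (rule sum.cong) (auto simp: ind_D_def)
    thus ?thesis unfolding diff_count_def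
      using of_nat_card_eq_sum_indicator[of "\<lambda>e. e \<in> D \<and> e - d \<in> D"] by simp
  qed
  hence "16 * of_nat (diff_count d) = (\<Sum>e\<in>UNIV. (4 * ind_D e) * (4 * ind_D (e - d)))"
    by (simp add: sum_distrib_left mult_ac)
  also have "\<dots> = (\<Sum>e\<in>UNIV. (2 * nu e + \<alpha> * chi e + cnj \<alpha> * cnj (chi e)) *
       (2 * nu (e - d) + \<alpha> * chi (e - d) + cnj \<alpha> * cnj (chi (e - d))))"
    by (simp only: ind_D_decomposition)
  also have "\<dots> = 2 * 2 * (\<Sum>e\<in>UNIV. nu e * nu (e - d)) + 2 * \<alpha> * (\<Sum>e\<in>UNIV. nu e * chi (e - d))
     + 2 * cnj \<alpha> * (\<Sum>e\<in>UNIV. nu e * cnj (chi (e - d)))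
     + \<alpha> * 2 * (\<Sum>e\<in>UNIV. chi e * nu (e - d)) + \<alpha> * \<alpha> * (\<Sum>e\<in>UNIV. chi e * chi (e - d))
     + \<alpha> * cnj \<alpha> * (\<Sum>e\<in>UNIV. chi e * cnj (chi (e - d)))
     + cnj \<alpha> * 2 * (\<Sum>e\<in>UNIV. cnj (chi e) * nu (e - d)) + cnj \<alpha> * \<alpha> * (\<Sum>e\<in>UNIV. cnj (chi e) * chi (e - d))
     + cnj \<alpha> * cnj \<alpha> * (\<Sum>e\<in>UNIV. cnj (chi e) * cnj (chi (e - d)))"
    by (simp only: sum_product_trinomials sum_scaled_product)
  also have "\<dots> = 4 * of_nat CARD('a) - 12 + 2 * \<i> * (chi d)^2 * J - 2 * \<i> * (cnj (chi d))^2 * cnj J"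
    unfolding corr_nu_nu corr_nu_chi corr_nu_cnj_chi corr_chi_nu corr_chi_chi corr_chi_cnj_chi
      corr_cnj_chi_nu corr_cnj_chi_chi corr_cnj_chi_cnj_chi
    by (simp add: algebra_simps complex_eq_iff)
  finally show ?thesis .
qed

end

definition J_exponent :: "'a \<Rightarrow> nat" where "J_exponent y = cyc_index y + cyc_index (1 - y)"
definition J_re_term :: "'a \<Rightarrow> int" where
  "J_re_term y = (if y = 0 \<or> y = 1 then 0 else ipow_re (J_exponent y))"
definition J_im_term :: "'a \<Rightarrow> int" where
  "J_im_term y = (if y = 0 \<or> y = 1 then 0 else ipow_im (J_exponent y))"
definition JA :: int where "JA = (\<Sum>y\<in>UNIV. J_re_term y)"
definition JB :: int where "JB = (\<Sum>y\<in>UNIV. J_im_term y)"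

lemma J_term_eq: "chi y * chi (1 - y) = of_int (J_re_term y) + \<i> * of_int (J_im_term y)"
proof (cases "y = 0 \<or> y = 1")
  case True thus ?thesis by (auto simp: J_re_term_def J_im_term_def)
next
  case False
  hence "chi y * chi (1 - y) = \<i> ^ J_exponent y" by (simp add: chi_def J_exponent_def power_add)
  thus ?thesis using False
    by (simp add: J_re_term_def J_im_term_def power_of_sqrt_minus_1[OF power2_i] mult.commute)
qed

lemma J_eq: "J = of_int JA + \<i> * of_int JB"
  unfolding J_def JA_def JB_def J_term_eq by (simp add: sum.distrib sum_distrib_left)

lemma JA_JB_sum_squares: "JA ^ 2 + JB ^ 2 = int CARD('a)"
proof -
  have "J * cnj J = of_int (JA ^ 2 + JB ^ 2)"
    unfolding J_eq by (simp add: complex_eq_iff power2_eq_square)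
  hence "(of_int (JA ^ 2 + JB ^ 2) :: complex) = of_int (int CARD('a))" using J_mult_cnj_J by simp
  thus ?thesis using of_int_eq_iff by blast
qed

lemma diff_count_index_0: assumes "d \<in> D" "cyc_index d = 0"
  shows "4 * int (diff_count d) = int CARD('a) - 3 - JB"
proof -
  have d: "d \<noteq> 0" using assms by (simp add: mem_D_iff)
  have "chi d = 1" using assms d by (simp add: chi_def)
  hence "16 * (of_nat (diff_count d) :: complex) = 4 * of_nat CARD('a) - 12 + 2 * \<i> * J - 2 * \<i> * cnj J"
    using diff_count_formula[OF d] by simp
  also have "\<dots> = of_int (4 * (int CARD('a) - 3 - JB))"
    unfolding J_eq by (simp add: complex_eq_iff)
  finally have "(of_int (16 * int (diff_count d)) :: complex) = of_int (4 * (int CARD('a) - 3 - JB))" by simp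
  hence "16 * int (diff_count d) = 4 * (int CARD('a) - 3 - JB)" using of_int_eq_iff by blast
  thus ?thesis by simp
qed

lemma diff_count_index_1: assumes "d \<in> D" "cyc_index d = 1"
  shows "4 * int (diff_count d) = int CARD('a) - 3 + JB"
proof -
  have d: "d \<noteq> 0" using assms by (simp add: mem_D_iff)
  have "chi d = \<i>" using assms d by (simp add: chi_def)
  hence "16 * (of_nat (diff_count d) :: complex) = 4 * of_nat CARD('a) - 12 - 2 * \<i> * J + 2 * \<i> * cnj J"
    using diff_count_formula[OF d] by (simp add: power2_eq_square)
  also have "\<dots> = of_int (4 * (int CARD('a) - 3 + JB))"
    unfolding J_eq by (simp add: complex_eq_iff)
  finally have "(of_int (16 * int (diff_count d)) :: complex) = of_int (4 * (int CARD('a) - 3 + JB))" by simp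
  hence "16 * int (diff_count d) = 4 * (int CARD('a) - 3 + JB)" using of_int_eq_iff by blast
  thus ?thesis by simp
qed

lemma ndr_iff_JB: "nearly_doubly_regular (cyc_arc g) UNIV \<longleftrightarrow> JB = 2 \<or> JB = -2"
proof -
  have q: "int CARD('a) = 4 * int m + 1" using card_eq_4m_1 by simp
  have "(\<forall>d\<in>D. diff_count d = m \<or> diff_count d = m - 1) \<longleftrightarrow> JB = 2 \<or> JB = -2"
  proof
    assume H: "\<forall>d\<in>D. diff_count d = m \<or> diff_count d = m - 1"
    have "1 \<in> D" by (simp add: mem_D_iff cyc_index_1)
    hence a: "diff_count 1 = m \<or> diff_count 1 = m - 1" and a': "4 * int (diff_count 1) = int CARD('a) - 3 - JB"
      using H diff_count_index_0[of 1] cyc_index_1 by auto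
    have "g \<in> D" using g_nonzero by (simp add: mem_D_iff cyc_index_g)
    hence b: "diff_count g = m \<or> diff_count g = m - 1" and b': "4 * int (diff_count g) = int CARD('a) - 3 + JB"
      using H diff_count_index_1[of g] cyc_index_g by auto
    show "JB = 2 \<or> JB = -2" using a b a' b' q m_pos by auto
  next
    assume B: "JB = 2 \<or> JB = -2"
    show "\<forall>d\<in>D. diff_count d = m \<or> diff_count d = m - 1"
    proof
      fix d assume d: "d \<in> D"
      hence "cyc_index d = 0 \<or> cyc_index d = 1" by (auto simp: mem_D_iff)
      thus "diff_count d = m \<or> diff_count d = m - 1"
      proof
        assume "cyc_index d = 0"
        from diff_count_index_0[OF d this] B q m_pos show ?thesis by auto
      next
        assume "cyc_index d = 1"
        from diff_count_index_1[OF d this] B q m_pos show ?thesis by auto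
      qed
    qed
  qed
  thus ?thesis using ndr_iff_diff_count by simp
qed

lemma JB_even: "even JB"
proof -
  have "1 \<in> D" by (simp add: mem_D_iff cyc_index_1)
  from diff_count_index_0[OF this cyc_index_1] have "JB = int CARD('a) - 3 - 4 * int (diff_count 1)"
    by simp
  also have "\<dots> = 2 * (2 * int m - 1 - 2 * int (diff_count 1))" using card_eq_4m_1 by simp
  finally show ?thesis by simp
qed

section \<open>The Jacobi sum modulo the characteristic\<close>

definition power_sum :: "nat \<Rightarrow> 'a" where "power_sum j = (\<Sum>x\<in>UNIV. x ^ j)"

lemma power_sum_eq_0: assumes "\<not> n dvd j" shows "power_sum j = 0"
proof -
  have "power_sum j = (\<Sum>x\<in>UNIV. (g * x) ^ j)" unfolding power_sum_def
    using sum_UNIV_scale[OF g_nonzero, of "\<lambda>x. x ^ j"] by simp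
  also have "\<dots> = g ^ j * power_sum j"
    by (simp add: power_sum_def power_mult_distrib sum_distrib_left)
  finally have "(g ^ j - 1) * power_sum j = 0" by (simp add: algebra_simps)
  moreover have "g ^ j \<noteq> g ^ 0" unfolding g_power_eq_iff using assms by (simp add: dvd_eq_mod_eq_0)
  ultimately show ?thesis by simp
qed

lemma power_sum_multiple_n: assumes "j > 0" "n dvd j" shows "power_sum j = -1"
proof -
  obtain t where t: "j = n * t" using assms by blast
  have "power_sum j = (\<Sum>x\<in>UNIV. if (x::'a) = 0 then 0 else (1::'a))"
    unfolding power_sum_def
  proof (rule sum.cong[OF refl])
    fix x :: 'a show "x ^ j = (if x = 0 then 0 else 1)"
      using assms power_n_eq_1[of x] by (auto simp: t power_mult)
  qed
  also have "\<dots> = of_nat (card (UNIV - {0::'a}))"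
    by (simp add: sum.If_cases Diff_eq Int_def Compl_eq)
  also have "card (UNIV - {0::'a}) = CARD('a) - 1" by (simp add: card_Diff_subset)
  also have "(of_nat (CARD('a) - 1) :: 'a) = of_nat CARD('a) - 1" using card_ge_5
    by (simp add: of_nat_diff)
  finally show ?thesis by (simp add: of_nat_CARD_eq_0)
qed

lemma sum_power_times_one_minus_power: "(\<Sum>x\<in>UNIV. (x::'a) ^ a * (1 - x) ^ a) =
   (\<Sum>k\<le>a. of_nat (a choose k) * (-1) ^ k * power_sum (a + k))"
proof -
  have "(\<Sum>x\<in>UNIV. (x::'a) ^ a * (1 - x) ^ a) = (\<Sum>x\<in>UNIV. \<Sum>k\<le>a. of_nat (a choose k) * (-1) ^ k * x ^ (a + k))"
    by (rule sum.cong[OF refl]) (rule power_times_one_minus_power)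
  also have "\<dots> = (\<Sum>k\<le>a. of_nat (a choose k) * (-1) ^ k * power_sum (a + k))"
    unfolding power_sum_def by (subst sum.swap) (simp only: sum_distrib_left)
  finally show ?thesis .
qed

lemma sum_power_m_one_minus_power: "(\<Sum>x\<in>UNIV. (x::'a) ^ m * (1 - x) ^ m) = 0"
proof -
  have "power_sum (m + k) = 0" if "k \<le> m" for k
  proof (rule power_sum_eq_0)
    show "\<not> n dvd m + k"
    proof
      assume "n dvd m + k"
      moreover have "0 < m + k" "m + k < n" using that m_pos n_eq_4m by auto
      ultimately show False using dvd_imp_le[of n "m + k"] by linarith
    qed
  qed
  thus ?thesis unfolding sum_power_times_one_minus_power by simp
qed

lemma sum_power_3m_one_minus_power:
  "(\<Sum>x\<in>UNIV. (x::'a) ^ (3 * m) * (1 - x) ^ (3 * m)) = of_nat ((3 * m) choose m)"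
proof -
  have ps: "power_sum (3 * m + k) = (if k = m then -1 else 0)" if "k \<le> 3 * m" for k
  proof (cases "k = m")
    case True thus ?thesis using power_sum_multiple_n[of "3 * m + k"] m_pos by (simp add: n_eq_4m)
  next
    case False
    have "\<not> n dvd 3 * m + k"
    proof
      assume "n dvd 3 * m + k"
      then obtain t where t: "3 * m + k = 4 * m * t" by (auto simp: n_eq_4m)
      have "t \<noteq> 0" using t m_pos by (intro notI) simp
      moreover have "t < 2"
      proof (rule ccontr)
        assume "\<not> t < 2"
        hence "4 * m * t \<ge> 4 * m * 2" by simp
        thus False using t that m_pos by linarith
      qed
      ultimately have "t = 1" by simp
      thus False using t False by simp
    qed
    thus ?thesis using False power_sum_eq_0 by simp
  qed
  have "(\<Sum>x\<in>UNIV. (x::'a) ^ (3 * m) * (1 - x) ^ (3 * m)) =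
        (\<Sum>k\<le>3 * m. if k = m then - (of_nat ((3 * m) choose k) * (-1) ^ k) else 0)"
    unfolding sum_power_times_one_minus_power by (rule sum.cong) (auto simp: ps)
  also have "\<dots> = - (of_nat ((3 * m) choose m) * (-1) ^ m)" by (simp add: sum.delta)
  also have "(-1::'a) ^ m = -1" using m_odd by simp
  finally show ?thesis by simp
qed

lemma JA_plus_JB_iota: "of_int JA + of_int JB * iota = 0"
proof -
  have "(\<Sum>x\<in>UNIV. (x::'a) ^ m * (1 - x) ^ m) = (\<Sum>y\<in>UNIV. of_int (J_re_term y) + of_int (J_im_term y) * iota)"
  proof (rule sum.cong[OF refl])
    fix y :: 'a
    show "y ^ m * (1 - y) ^ m = of_int (J_re_term y) + of_int (J_im_term y) * iota"
    proof (cases "y = 0 \<or> y = 1")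
      case True thus ?thesis using m_pos by (auto simp: J_re_term_def J_im_term_def)
    next
      case False
      hence "y ^ m * (1 - y) ^ m = iota ^ J_exponent y"
        by (simp add: power_m_eq_iota_power J_exponent_def power_add)
      thus ?thesis using False
        by (simp add: J_re_term_def J_im_term_def power_of_sqrt_minus_1[OF iota_square])
    qed
  qed
  also have "\<dots> = of_int JA + of_int JB * iota"
    unfolding JA_def JB_def by (simp add: sum.distrib sum_distrib_right)
  finally show ?thesis using sum_power_m_one_minus_power by simp
qed

lemma JA_minus_JB_iota: "of_int JA - of_int JB * iota = of_nat ((3 * m) choose m)"
proof -
  have "(\<Sum>x\<in>UNIV. (x::'a) ^ (3 * m) * (1 - x) ^ (3 * m)) = (\<Sum>y\<in>UNIV. of_int (J_re_term y) - of_int (J_im_term y) * iota)"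
  proof (rule sum.cong[OF refl])
    fix y :: 'a
    show "y ^ (3 * m) * (1 - y) ^ (3 * m) = of_int (J_re_term y) - of_int (J_im_term y) * iota"
    proof (cases "y = 0 \<or> y = 1")
      case True thus ?thesis using m_pos by (auto simp: J_re_term_def J_im_term_def)
    next
      case False
      have e3: "y ^ (3 * m) * (1 - y) ^ (3 * m) = (y ^ m * (1 - y) ^ m) ^ 3"
        by (simp only: power_mult_distrib mult.commute[of 3 m] power_mult)
      hence "y ^ (3 * m) * (1 - y) ^ (3 * m) = (iota ^ J_exponent y) ^ 3"
        using False by (simp add: power_m_eq_iota_power J_exponent_def power_add)
      also have "\<dots> = iota ^ (3 * J_exponent y)" by (simp flip: power_mult add: mult.commute)
      finally show ?thesis using False
        by (simp add: J_re_term_def J_im_term_def power_of_sqrt_minus_1[OF iota_square]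
            ipow_re_triple ipow_im_triple)
    qed
  qed
  also have "\<dots> = of_int JA - of_int JB * iota"
    unfolding JA_def JB_def by (simp add: sum_subtractf sum_distrib_right)
  finally show ?thesis using sum_power_3m_one_minus_power by simp
qed

lemma CHAR_mod_4: "CHAR('a) mod 4 = 1"
proof -
  obtain k where "CARD('a) = CHAR('a) ^ k" using CARD_eq_CHAR_power by blast
  hence "CHAR('a) ^ k mod 8 = 5" using card_mod_8 by simp
  thus ?thesis by (rule power_mod_8_eq_5_imp_mod_4)
qed

lemma four_nonzero: "(4::'a) \<noteq> 0"
proof
  assume "(4::'a) = 0"
  hence "(of_nat 4 :: 'a) = 0" by simp
  hence "CHAR('a) dvd 4" by (simp only: of_nat_eq_0_iff_char_dvd)
  hence "CHAR('a) \<le> 4" by (rule dvd_imp_le) simp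
  moreover have "CHAR('a) \<noteq> 1" using prime_CHAR_finite_field[where 'a='a] by auto
  ultimately show False using CHAR_mod_4 by presburger
qed

text \<open>The base-\<open>p\<close> digits of \<open>m = (p\<^sup>k - 1) / 4\<close> are all \<open>c = (p - 1) / 4\<close>, those of
  \<open>3 m\<close> are all \<open>3 c < p\<close>, so Lucas' theorem applies.\<close>
lemma of_nat_choose_3m_m_nonzero: "(of_nat ((3 * m) choose m) :: 'a) \<noteq> 0"
proof -
  define p where "p = CHAR('a)"
  have pr: "prime p" unfolding p_def by (rule prime_CHAR_finite_field)
  obtain k where qk: "CARD('a) = p ^ k" unfolding p_def using CARD_eq_CHAR_power by blast
  define c where "c = (p - 1) div 4"
  have pc: "p - 1 = 4 * c" using CHAR_mod_4 unfolding c_def p_def by presburger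
  have p1: "p \<ge> 1" using pr prime_ge_1_nat by blast
  have c3: "3 * c < p" using pc p1 by linarith
  define R where "R = (\<Sum>j<k. p ^ j)"
  have "(p - 1) * R = p ^ k - 1" unfolding R_def by (rule nat_geometric_sum[OF p1])
  hence "m = c * R" using pc qk card_eq_4m_1 by simp
  hence "(of_nat ((3 * m) choose m) :: 'a) = of_nat ((3 * c * R) choose (c * R))"
    by (simp add: mult.assoc)
  also have "\<dots> = of_nat ((3 * c) choose c) ^ k"
    unfolding R_def p_def using pr c3 by (intro of_nat_choose_repdigit) (auto simp: p_def)
  finally show ?thesis
    using of_nat_choose_neq_0_CHAR[where 'a='a, of c "3 * c"] pr c3 by (simp add: p_def)
qed

lemma ndr_imp_CARD_eq_square_plus_4:
  assumes "nearly_doubly_regular (cyc_arc g) UNIV"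
  shows "\<exists>s::int. odd s \<and> int CARD('a) = s ^ 2 + 4"
proof -
  have "JB = 2 \<or> JB = -2" using assms ndr_iff_JB by simp
  hence q: "int CARD('a) = JA ^ 2 + 4" using JA_JB_sum_squares by auto
  have "odd (int CARD('a))" using card_eq_4m_1 by simp
  hence "odd JA" using q by auto
  thus ?thesis using q by blast
qed

text \<open>Since \<open>s\<^sup>2 = -4\<close> in the field, one of \<open>\<plusminus>s\<close> equals \<open>2 / \<iota>\<close>.\<close>
lemma obtain_sign_of_s:
  assumes "odd s0" "int CARD('a) = s0 ^ 2 + 4"
  obtains s :: int where "odd s" "int CARD('a) = s ^ 2 + 4" "iota * of_int s = 2"
proof -
  define S where "S = (of_int s0 :: 'a)"
  have "S ^ 2 + 4 = 0"
    using of_nat_CARD_eq_0[where 'a='a] assms(2) unfolding S_def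
    by (metis of_int_add of_int_numeral of_int_of_nat_eq of_int_power)
  hence "(2 - iota * S) * (2 + iota * S) = 0"
    using iota_square by (simp add: algebra_simps power2_eq_square)
  hence "iota * of_int s0 = 2 \<or> iota * of_int (- s0) = (2::'a)"
    unfolding S_def by (auto simp: add_eq_0_iff)
  thus ?thesis using that[of s0] that[of "- s0"] assms by auto
qed

text \<open>Reducing \<open>J\<close> into the field: \<open>JA = - JB \<iota>\<close> and \<open>JB \<noteq> 0\<close> there, while
  \<open>s = - 2 \<iota>\<close>; hence \<open>JA s - 2 JB = - 4 JB\<close> and \<open>2 JA + JB s = - 4 JB \<iota>\<close> are nonzero.\<close>
lemma not_CHAR_dvd_JA_JB_s:
  assumes s: "iota * of_int s = (2::'a)"
  shows "\<not> int CHAR('a) dvd JA * s - 2 * JB" "\<not> int CHAR('a) dvd 2 * JA + JB * s"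
proof -
  define a b \<sigma> where "a = (of_int JA :: 'a)" and "b = (of_int JB :: 'a)" and "\<sigma> = (of_int s :: 'a)"
  have ab: "a = - b * iota" using JA_plus_JB_iota unfolding a_def b_def
    by (simp add: eq_neg_iff_add_eq_0)
  have b0: "b \<noteq> 0"
  proof
    assume "b = 0"
    hence "a - b * iota = 0" using ab by simp
    thus False using JA_minus_JB_iota of_nat_choose_3m_m_nonzero unfolding a_def b_def by simp
  qed
  have "iota * (iota * \<sigma>) = iota * 2" using s unfolding \<sigma>_def by simp
  hence "iota ^ 2 * \<sigma> = 2 * iota" by (simp add: power2_eq_square mult_ac)
  hence "- \<sigma> = 2 * iota" using iota_square by simp
  hence sig: "\<sigma> = - 2 * iota" by (metis minus_minus mult_minus_left)
  have iota0: "iota \<noteq> 0" using iota_square by (intro notI) simp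
  have "(of_int (JA * s - 2 * JB) :: 'a) = a * \<sigma> - 2 * b" unfolding a_def b_def \<sigma>_def by simp
  also have "\<dots> = 2 * b * iota ^ 2 - 2 * b" unfolding ab sig by (simp add: power2_eq_square mult_ac)
  also have "\<dots> = - 4 * b" using iota_square by simp
  finally have "(of_int (JA * s - 2 * JB) :: 'a) \<noteq> 0" using four_nonzero b0 by simp
  thus "\<not> int CHAR('a) dvd JA * s - 2 * JB" by (metis of_int_eq_0_iff_char_dvd)
  have "(of_int (2 * JA + JB * s) :: 'a) = 2 * a + b * \<sigma>" unfolding a_def b_def \<sigma>_def by simp
  also have "\<dots> = - 4 * b * iota" unfolding ab sig by (simp add: algebra_simps)
  finally have "(of_int (2 * JA + JB * s) :: 'a) \<noteq> 0" using four_nonzero b0 iota0 by simp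
  thus "\<not> int CHAR('a) dvd 2 * JA + JB * s" by (metis of_int_eq_0_iff_char_dvd)
qed

lemma CARD_eq_square_plus_4_imp_ndr:
  assumes "odd s0" "int CARD('a) = s0 ^ 2 + 4"
  shows "nearly_doubly_regular (cyc_arc g) UNIV"
proof -
  obtain s where s: "odd s" "int CARD('a) = s ^ 2 + 4" "iota * of_int s = 2"
    using obtain_sign_of_s[OF assms] .
  have "JB = 2 \<or> JB = -2"
    using JA_JB_sum_squares s(2)[symmetric] JB_even s(1)
      not_CHAR_dvd_JA_JB_s[OF s(3), THEN coprime_int_CARD_if_not_CHAR_dvd]
    by (rule sum_squares_eq_square_plus_4)
  thus ?thesis using ndr_iff_JB by simp
qed

end

theorem theorem1:
  fixes g :: "'a::{finite,field}"
  assumes "CARD('a) mod 8 = 5"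
    and "primitive_element g"
  shows "nearly_doubly_regular (cyc_arc g) (UNIV :: 'a set) \<longleftrightarrow>
         (\<exists>s::int. odd s \<and> int CARD('a) = s ^ 2 + 4)"
proof -
  interpret cyclotomic_tournament g using assms by unfold_locales
  show ?thesis using ndr_imp_CARD_eq_square_plus_4 CARD_eq_square_plus_4_imp_ndr by blast
qed

end
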